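(* With notation as in the context, for all $v,w\in G\backslash H$, $$d(\gamma_1(v),\gamma_1(w))=\begin{cases} dd(v,w)-2 & \text{if } v,w \text{ are } L \text{ cosets of opposite colors (one in } \mathscr{O}_1, \text{ the other in } \mathscr{O}_2),\\ dd(v,w) & \text{otherwise.}\end{cases}$$
   Context: Group $H$ side. $G\backslash H$ is the set of 56 right cosets of $G\cong W(E_6)$ in $H\cong W(E_7)$ (concretely, $H\subset GL(8,\mathbb{C})$ generated by the coordinate transpositions $(23),\dots,(78)$ and two explicit matrices; only the indexing below is needed). The cosets are indexed $\pm v(i,j)$, $0\le i<j\le7$. Associate the vector $\pm v(i,j)=\pm\big(4(\vec e_{i+1}+\vec e_{j+1})-\sum_{k=1}^8\vec e_k\big)\in\mathbb{Z}^8$ and define $dd(v,w)=\frac1{16}\sum_{k=1}^8(v_k-w_k)^2$. Blue $L$ cosets $\mathscr{O}_1=\{v(0,j),-v(1,j):2\le j\le7\}$, red $L$ cosets $\mathscr{O}_2=\{v(1,j),-v(0,j):2\le j\le7\}$, $J$ cosets $\mathscr{O}_3=\{\pm v(0,1)\}\cup\{\pm v(i,j):2\le i<j\le7\}$. Group $H_1$ side. Let $V=\{(A,B,C,D,E,F,G)^T\in\mathbb{C}^7:E+F+G-A-B-C-D=1\}$; let $X_1$ have rows $e_1$, $-e_3+e_5$, $-e_2+e_5$, $e_4$, $e_5$, $-e_2-e_3+e_5+e_6$, $-e_2-e_3+e_5+e_7$; $H_1=\langle(12),(23),(34),(56),(67),X_1\rangle\subset GL(7,\mathbb{C})$ ($\cong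 W(D_6)$), $G_J=\langle(23),(34),(56),(67),X_1\rangle$, $G_L=\langle(12),(23),(34),(67),(57)X_1(57)\rangle$. Let $Z_1$ be the unique non-identity central element of $H_1$; on $V$, $Z_1\vec x=(1-A,1-B,1-C,1-D,2-E,2-F,2-G)^T$. $J$-coset labels: the first coordinate of $\alpha\vec x$ determines $G_J\alpha$; with $(A_0,\dots,A_3)=(A,B,C,D)$, $(E_0,\dots,E_3)=(1,E,F,G)$ it is $1+A_r-E_q$ (label: the string $b_rb_q$, where $b_0={+}{+}{+},b_1={+}{-}{-},b_2={-}{+}{-},b_3={-}{-}{+}$) or $E_q-A_r$ (label: the negation of $b_rb_q$). $L$-coset labels: the coset labeled $\sigma$ is $G_L\beta_\sigma$ with $\beta_\sigma\vec x=u_\sigma$ on $V$, where $u_6=(A,B,C,D,G,F,E)$, $u_5=(A,B,C,D,F,E,G)$, $u_4=(A,B,C,D,E,F,G)$, $u_3=(A,1+A-E,1+A-F,1+A-G,1+A-D,1+A-B,1+A-C)$, $u_2=(A,1+A-E,1+A-F,1+A-G,1+A-C,1+A-B,1+A-D)$, $u_1=(A,1+A-E,1+A-F,1+A-G,1+A-B,1+A-C,1+A-D)$, and $u_{\overline k}=Z_1u_k$ for $1\le k\le 6$. Let $T=(G_L\backslash H_1)\cup(G_J\backslash H_1)$ (44 elements). Two elements of $T$ are opposite if some element of one equals $Z_1$ times some element of the other. The distance $d$ on $T$: $d(\sigma_1,\sigma_2)=0$ if $\sigma_1=\sigma_2$; if $\sigma_1\ne\sigma_2$ are both $J$ cosets,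 $d$ is the Hamming distance of their sign strings; if at least one is an $L$ coset (and $\sigma_1\neq\sigma_2$), $d=4$ if they are opposite and $d=2$ otherwise. The map $\gamma_1:G\backslash H\to T$: $\gamma_1(v(0,j))=\gamma_1(v(1,j))=$ the $L$ coset labeled $j-1$, $\gamma_1(-v(1,j))=\gamma_1(-v(0,j))=$ the $L$ coset labeled $\overline{j-1}$ ($2\le j\le7$); $\gamma_1(\pm v(0,1))$ is the $J$ coset with string ${\pm}{\pm}{\pm}{\pm}{\pm}{\pm}$ (all signs equal to the given sign); for $2\le i<j\le7$, $\gamma_1(v(i,j))$ is the $J$ coset whose string has plus signs in positions $i-1,j-1$ and minus signs elsewhere, and $\gamma_1(-v(i,j))$ the one with the negated string. *)

theory Defs
  imports "HOL-Analysis.Analysis"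
begin

text \<open>A coset index (s,i,j) stands for +v(i,j) if s, and -v(i,j) otherwise, 0 \<le> i < j \<le> 7.\<close>
type_synonym cidx = "bool \<times> nat \<times> nat"

definition cosets56 :: "cidx set" where
  "cosets56 = {(s,i,j). i < j \<and> j \<le> 7}"

text \<open>Coordinate k (0-based, k < 8) of the vector attached to the index:
  +-(4(e_(i+1)+e_(j+1)) - sum_k e_k).\<close>
definition cvec :: "cidx \<Rightarrow> nat \<Rightarrow> int" where
  "cvec v k = (case v of (s,i,j) \<Rightarrow>
      (if s then 1 else -1) * (4 * ((if k = i then 1 else 0) + (if k = j then 1 else 0)) - 1))"

definition dd :: "cidx \<Rightarrow> cidx \<Rightarrow> real" where
  "dd v w = (1/16) * (\<Sum>k<8. real_of_int ((cvec v k - cvec w k)^2))"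

definition O1 :: "cidx set" where
  "O1 = {(True,0,j) | j. 2 \<le> j \<and> j \<le> 7} \<union> {(False,1,j) | j. 2 \<le> j \<and> j \<le> 7}"

definition O2 :: "cidx set" where
  "O2 = {(True,1,j) | j. 2 \<le> j \<and> j \<le> 7} \<union> {(False,0,j) | j. 2 \<le> j \<and> j \<le> 7}"

definition O3 :: "cidx set" where
  "O3 = {(True,0,1), (False,0,1)} \<union> {(s,i,j) | s i j. 2 \<le> i \<and> i < j \<and> j \<le> 7}"

text \<open>Coordinates 1..7 of C^7 are the numerals 1,...,7 of the index type 7
  (these are 7 distinct elements; 7 = 0 in that type). A,B,C,D,E,F,G are coordinates 1..7.\<close>
type_synonym mat7 = "complex^7^7"
type_synonym vec7 = "complex^7"

definition mk7 :: "complex \<Rightarrow> complex \<Rightarrow> complex \<Rightarrow> complex \<Rightarrow> complex \<Rightarrow> complex \<Rightarrow> complex \<Rightarrow> vec7" where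
  "mk7 a b c d e f g = (\<chi> i. if i = 1 then a else if i = 2 then b else if i = 3 then c
      else if i = 4 then d else if i = 5 then e else if i = 6 then f else g)"

definition evec :: "7 \<Rightarrow> vec7" where
  "evec k = (\<chi> i. if i = k then 1 else 0)"

definition tmat :: "7 \<Rightarrow> 7 \<Rightarrow> mat7" where
  "tmat a b = (\<chi> r c. if c = (if r = a then b else if r = b then a else r) then 1 else 0)"

definition X1 :: mat7 where
  "X1 = (\<chi> r. if r = 1 then evec 1
          else if r = 2 then evec 5 - evec 3
          else if r = 3 then evec 5 - evec 2
          else if r = 4 then evec 4
          else if r = 5 then evec 5
          else if r = 6 then evec 5 + evec 6 - evec 2 - evec 3
          else evec 5 + evec 7 - evec 2 - evec 3)"

inductive_set gen_grp :: "mat7 set \<Rightarrow> mat7 set" for S where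
  one: "mat 1 \<in> gen_grp S"
| base: "a \<in> S \<Longrightarrow> a \<in> gen_grp S"
| inv: "a \<in> S \<Longrightarrow> matrix_inv a \<in> gen_grp S"
| mult: "a \<in> gen_grp S \<Longrightarrow> b \<in> gen_grp S \<Longrightarrow> a ** b \<in> gen_grp S"

definition H1 :: "mat7 set" where
  "H1 = gen_grp {tmat 1 2, tmat 2 3, tmat 3 4, tmat 5 6, tmat 6 7, X1}"

definition GJ :: "mat7 set" where
  "GJ = gen_grp {tmat 2 3, tmat 3 4, tmat 5 6, tmat 6 7, X1}"

definition GL :: "mat7 set" where
  "GL = gen_grp {tmat 1 2, tmat 2 3, tmat 3 4, tmat 6 7, tmat 5 7 ** X1 ** tmat 5 7}"

definition Vset :: "vec7 set" where
  "Vset = {x. x$5 + x$6 + x$7 - x$1 - x$2 - x$3 - x$4 = 1}"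

definition Z1 :: mat7 where
  "Z1 = (THE z. z \<in> H1 \<and> z \<noteq> mat 1 \<and> (\<forall>g\<in>H1. g ** z = z ** g))"

definition rcos :: "mat7 set \<Rightarrow> mat7 \<Rightarrow> mat7 set" where
  "rcos K a = (\<lambda>g. g ** a) ` K"

definition Jcosets :: "mat7 set set" where
  "Jcosets = rcos GJ ` H1"

definition Lcosets :: "mat7 set set" where
  "Lcosets = rcos GL ` H1"

definition Tset :: "mat7 set set" where
  "Tset = Lcosets \<union> Jcosets"

text \<open>A J label (p,r,q), r,q \<in> {0..3}: p = True means first coordinate 1 + A_r - E_q,
  label string b_r b_q; p = False means E_q - A_r, label the negated string.\<close>
type_synonym jlab = "bool \<times> nat \<times> nat"

definition valid_jlab :: "jlab \<Rightarrow> bool" where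
  "valid_jlab l = (case l of (p,r,q) \<Rightarrow> r \<le> 3 \<and> q \<le> 3)"

definition Acoord :: "nat \<Rightarrow> vec7 \<Rightarrow> complex" where
  "Acoord r x = x $ (of_nat (r + 1))"

definition Ecoord :: "nat \<Rightarrow> vec7 \<Rightarrow> complex" where
  "Ecoord q x = (if q = 0 then 1 else x $ (of_nat (q + 4)))"

definition jfun :: "jlab \<Rightarrow> vec7 \<Rightarrow> complex" where
  "jfun l x = (case l of (p,r,q) \<Rightarrow>
     if p then 1 + Acoord r x - Ecoord q x else Ecoord q x - Acoord r x)"

text \<open>Sign strings as bool lists (True = +).\<close>
definition bstr :: "nat \<Rightarrow> bool list" where
  "bstr r = (if r = 0 then [True,True,True] else if r = 1 then [True,False,False]
             else if r = 2 then [False,True,False] else [False,False,True])"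

definition jstring :: "jlab \<Rightarrow> bool list" where
  "jstring l = (case l of (p,r,q) \<Rightarrow> if p then bstr r @ bstr q else map Not (bstr r @ bstr q))"

definition Jcoset :: "jlab \<Rightarrow> mat7 set" where
  "Jcoset l = {\<alpha> \<in> H1. \<forall>x\<in>Vset. (\<alpha> *v x) $ 1 = jfun l x}"

definition Jcoset_of_string :: "bool list \<Rightarrow> mat7 set" where
  "Jcoset_of_string s = Jcoset (THE l. valid_jlab l \<and> jstring l = s)"

definition jstr_of :: "mat7 set \<Rightarrow> bool list" where
  "jstr_of \<sigma> = (SOME s. \<exists>l. valid_jlab l \<and> \<sigma> = Jcoset l \<and> s = jstring l)"

definition hamming :: "bool list \<Rightarrow> bool list \<Rightarrow> nat" where
  "hamming s t = length (filter (\<lambda>(a,b). a \<noteq> b) (zip s t))"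

text \<open>An L label (bar,k), 1 \<le> k \<le> 6: k if bar = False, overline k if bar = True.\<close>
definition ufun :: "nat \<Rightarrow> vec7 \<Rightarrow> vec7" where
  "ufun k x = (let A = x$1; B = x$2; C = x$3; D = x$4; E = x$5; F = x$6; G = x$7 in
     if k = 6 then mk7 A B C D G F E
     else if k = 5 then mk7 A B C D F E G
     else if k = 4 then mk7 A B C D E F G
     else if k = 3 then mk7 A (1+A-E) (1+A-F) (1+A-G) (1+A-D) (1+A-B) (1+A-C)
     else if k = 2 then mk7 A (1+A-E) (1+A-F) (1+A-G) (1+A-C) (1+A-B) (1+A-D)
     else mk7 A (1+A-E) (1+A-F) (1+A-G) (1+A-B) (1+A-C) (1+A-D))"

definition ulab :: "bool \<times> nat \<Rightarrow> vec7 \<Rightarrow> vec7" where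
  "ulab \<sigma> x = (case \<sigma> of (bar,k) \<Rightarrow> if bar then Z1 *v ufun k x else ufun k x)"

definition Lcoset :: "bool \<times> nat \<Rightarrow> mat7 set" where
  "Lcoset \<sigma> = rcos GL (THE \<beta>. \<beta> \<in> H1 \<and> (\<forall>x\<in>Vset. \<beta> *v x = ulab \<sigma> x))"

definition opposite :: "mat7 set \<Rightarrow> mat7 set \<Rightarrow> bool" where
  "opposite \<sigma>1 \<sigma>2 = (\<exists>a\<in>\<sigma>1. \<exists>b\<in>\<sigma>2. a = Z1 ** b)"

definition dT :: "mat7 set \<Rightarrow> mat7 set \<Rightarrow> nat" where
  "dT \<sigma>1 \<sigma>2 = (if \<sigma>1 = \<sigma>2 then 0
     else if \<sigma>1 \<in> Jcosets \<and> \<sigma>2 \<in> Jcosets then hamming (jstr_of \<sigma>1) (jstr_of \<sigma>2)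
     else if opposite \<sigma>1 \<sigma>2 then 4 else 2)"

definition gamma1 :: "cidx \<Rightarrow> mat7 set" where
  "gamma1 v = (case v of (s,i,j) \<Rightarrow>
     if i = 0 \<and> j = 1 then Jcoset_of_string (replicate 6 s)
     else if i \<le> 1 then
       (if (s \<and> i = 0) \<or> (s \<and> i = 1) then Lcoset (False, j - 1) else Lcoset (True, j - 1))
     else Jcoset_of_string
       (map (\<lambda>p. if p = i - 1 \<or> p = j - 1 then s else \<not> s) [1..<7]))"

end

theory Submission
  imports Defs
begin

(* Everything reduces to finite computations with integer matrices, since H1, GJ and GL are
   generated by involutions and their elements are words in the generators acting on integer
   row vectors. A coset GJ a is determined by the first row e1 a: GJ fixes e1, and a Schreier
   transversal shows that GJ is the whole stabiliser of e1 in H1. A coset GL b is determined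
   by psi b for a row vector psi fixed by GL. Z1 is an explicit word: commuting with GJ and
   two H1-invariants (a bilinear form and a fixed column vector) leave only two possible first
   rows for a central element, and a central element is determined by its first row. The
   invariant form vanishes on (e1, psi), hence on (e1 a, psi a) for every a in H1, which
   decides when a J coset meets an L coset; conversely explicit witnesses exist. The distance
   formula is then checked on all 56 x 56 pairs of cosets. *)

lemma UNIV_7: "(UNIV :: 7 set) = {1,2,3,4,5,6,7}"
  by (rule sym, rule card_subset_eq) simp_all

lemma forall_7: "(\<forall>i::7. P i) \<longleftrightarrow> P 1 \<and> P 2 \<and> P 3 \<and> P 4 \<and> P 5 \<and> P 6 \<and> P 7"
  by (metis UNIV_7 UNIV_I insertE empty_iff)

lemma sum_UNIV_7: "sum f (UNIV :: 7 set) = f 1 + f 2 + f 3 + f 4 + f 5 + f 6 + f 7"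
  unfolding UNIV_7 by (simp add: add.assoc)

definition idx :: "7 \<Rightarrow> nat" where
  "idx i = (if i = 1 then 0 else if i = 2 then 1 else if i = 3 then 2 else if i = 4 then 3
     else if i = 5 then 4 else if i = 6 then 5 else 6)"

lemma idx_simps [simp]:
  "idx 1 = 0" "idx 2 = 1" "idx 3 = 2" "idx 4 = 3" "idx 5 = 4" "idx 6 = 5" "idx 7 = 6"
  by (simp_all add: idx_def)

lemma idx_less [simp]: "idx i < 7"
  by (simp add: idx_def)

lemma idx_eq_iff: "idx i = idx j \<longleftrightarrow> i = j"
proof -
  have "\<forall>i j. idx i = idx j \<longrightarrow> i = j"
    by (simp only: forall_7 idx_simps) simp
  then show ?thesis by blast
qed

lemma idx_eq_iff_of_nat: "k < 7 \<Longrightarrow> idx i = k \<longleftrightarrow> i = of_nat (k + 1)"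
proof -
  assume "k < 7"
  then have "k = 0 \<or> k = 1 \<or> k = 2 \<or> k = 3 \<or> k = 4 \<or> k = 5 \<or> k = 6" by arith
  then have "idx (of_nat (k + 1)) = k" by auto
  then show ?thesis using idx_eq_iff by metis
qed

lemma idx_surj: "k < 7 \<Longrightarrow> \<exists>i. idx i = k"
  using idx_eq_iff_of_nat by blast

lemma sum_UNIV_idx: "(\<Sum>i\<in>UNIV. f (idx i)) = (\<Sum>k<7. f k)"
  by (simp add: sum_UNIV_7 eval_nat_numeral add.assoc)

lemma length_7E:
  assumes "length xs = 7"
  obtains a b c d e f g where "xs = [a, b, c, d, e, f, g]"
  using assms by (simp add: length_Suc_conv eval_nat_numeral) blast

definition vec_of_list :: "int list \<Rightarrow> vec7" where
  "vec_of_list xs = (\<chi> i. of_int (xs ! idx i))"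

definition mat_of_rows :: "int list list \<Rightarrow> mat7" where
  "mat_of_rows M = (\<chi> i. vec_of_list (M ! idx i))"

lemma vec_of_list_nth [simp]: "vec_of_list xs $ i = of_int (xs ! idx i)"
  by (simp add: vec_of_list_def)

lemma mat_of_rows_row [simp]: "mat_of_rows M $ i = vec_of_list (M ! idx i)"
  by (simp add: mat_of_rows_def)

lemma vec_of_list_inject:
  assumes "length xs = 7" and "length ys = 7"
  shows "vec_of_list xs = vec_of_list ys \<longleftrightarrow> xs = ys"
proof
  assume eq: "vec_of_list xs = vec_of_list ys"
  show "xs = ys"
  proof (rule nth_equalityI)
    fix k assume "k < length xs"
    then obtain i where "idx i = k" using idx_surj assms by auto
    then show "xs ! k = ys ! k" using arg_cong[OF eq, of "\<lambda>v. v $ i"] by simp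
  qed (use assms in simp)
qed simp

definition unit_list :: "nat \<Rightarrow> int list" where
  "unit_list k = map (\<lambda>i. if i = k then 1 else 0) [0..<7]"

lemma length_unit_list [simp]: "length (unit_list k) = 7"
  by (simp add: unit_list_def)

lemma unit_list_0: "unit_list 0 = [1, 0, 0, 0, 0, 0, 0]"
  by (simp add: unit_list_def upt_rec)

lemma unit_list_row_mult: "vec_of_list (unit_list (idx i)) v* A = A $ i"
proof -
  have "(vec_of_list (unit_list (idx i)) v* A) $ j = A $ i $ j" for j
  proof -
    have "(vec_of_list (unit_list (idx i)) v* A) $ j = (\<Sum>m\<in>UNIV. if m = i then A $ m $ j else 0)"
      unfolding vector_matrix_mult_def vec_lambda_beta
      by (rule sum.cong) (simp_all add: unit_list_def idx_eq_iff)
    then show ?thesis by simp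
  qed
  then show ?thesis by (simp add: vec_eq_iff)
qed

lemma e1_row_mult: "vec_of_list (unit_list 0) v* A = A $ 1"
  using unit_list_row_mult[of 1] by simp

lemma mat_eq_by_unit_rows:
  fixes A B :: mat7
  assumes "\<And>k. k < 7 \<Longrightarrow> vec_of_list (unit_list k) v* A = vec_of_list (unit_list k) v* B"
  shows "A = B"
  using assms[OF idx_less] by (simp add: vec_eq_iff unit_list_row_mult)

lemma row_of_mult: "((A :: mat7) ** B) $ i = A $ i v* B"
  by (simp add: vec_eq_iff matrix_matrix_mult_def vector_matrix_mult_def)

definition lmult :: "int list list \<Rightarrow> int list list \<Rightarrow> int list list" where
  "lmult A B = map (\<lambda>r. map (\<lambda>c. \<Sum>k\<leftarrow>[0..<7]. A ! r ! k * B ! k ! c) [0..<7]) [0..<7]"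

lemma mat_of_rows_mult: "mat_of_rows A ** mat_of_rows B = mat_of_rows (lmult A B)"
proof -
  have "(mat_of_rows A ** mat_of_rows B) $ i $ j = mat_of_rows (lmult A B) $ i $ j" for i j
  proof -
    have "(mat_of_rows A ** mat_of_rows B) $ i $ j
        = of_int (\<Sum>k\<in>UNIV. A ! idx i ! idx k * B ! idx k ! idx j)"
      by (simp add: matrix_matrix_mult_def)
    also have "\<dots> = of_int (\<Sum>k<7. A ! idx i ! k * B ! k ! idx j)"
      by (simp only: sum_UNIV_idx[of "\<lambda>k. A ! idx i ! k * B ! k ! idx j"])
    finally show ?thesis
      by (simp add: lmult_def sum_set_upt_conv_sum_list_nat[symmetric] atLeast0LessThan)
  qed
  then show ?thesis by (simp add: vec_eq_iff)
qed

lemma mat_1_eq_rows: "mat 1 = mat_of_rows (map unit_list [0..<7])"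
  by (simp add: vec_eq_iff forall_7 mat_def unit_list_def)

definition gen :: "nat \<Rightarrow> mat7" where
  "gen n = (if n = 0 then tmat 1 2 else if n = 1 then tmat 2 3 else if n = 2 then tmat 3 4
     else if n = 3 then tmat 5 6 else if n = 4 then tmat 6 7 else if n = 5 then X1
     else if n = 6 then tmat 5 7 ** X1 ** tmat 5 7 else mat 1)"

fun gen_row :: "nat \<Rightarrow> int list \<Rightarrow> int list" where
  "gen_row n [a, b, c, d, e, f, g] =
    (if n = 0 then [b, a, c, d, e, f, g]
     else if n = 1 then [a, c, b, d, e, f, g]
     else if n = 2 then [a, b, d, c, e, f, g]
     else if n = 3 then [a, b, c, d, f, e, g]
     else if n = 4 then [a, b, c, d, e, g, f]
     else if n = 5 then [a, -c-f-g, -b-f-g, d, b+c+e+f+g, f, g]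
     else if n = 6 then [a, -c-e-f, -b-e-f, d, e, f, b+c+e+f+g]
     else [a, b, c, d, e, f, g])"
| "gen_row n xs = xs"

lemma length_gen_row [simp]: "length (gen_row n xs) = length xs"
  by (cases "(n, xs)" rule: gen_row.cases) simp_all

lemma row_mult_tmat_nth: "(x v* tmat a b) $ j = x $ (if j = a then b else if j = b then a else j)"
proof -
  have "(x v* tmat a b) $ j
      = (\<Sum>i\<in>UNIV. if i = (if j = a then b else if j = b then a else j) then x $ i else 0)"
    unfolding vector_matrix_mult_def tmat_def vec_lambda_beta by (rule sum.cong) auto
  then show ?thesis by simp
qed

lemma row_mult_X1:
  "vec_of_list [a, b, c, d, e, f, g] v* X1 = vec_of_list [a, -c-f-g, -b-f-g, d, b+c+e+f+g, f, g]"
  by (simp add: vec_eq_iff forall_7 vector_matrix_mult_def sum_UNIV_7 X1_def evec_def)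

lemma row_mult_gen:
  assumes "length r = 7"
  shows "vec_of_list r v* gen n = vec_of_list (gen_row n r)"
proof -
  obtain a b c d e f g where r: "r = [a, b, c, d, e, f, g]" using assms by (rule length_7E)
  have swap57: "vec_of_list [a, b, c, d, e, f, g] v* tmat 5 7 = vec_of_list [a, b, c, d, g, f, e]"
    for a b c d e f g
    by (simp add: vec_eq_iff forall_7 row_mult_tmat_nth)
  consider "n \<le> 4" | "n = 5" | "n = 6" | "n > 6" by arith
  then show ?thesis
  proof cases
    case 1
    then have "n = 0 \<or> n = 1 \<or> n = 2 \<or> n = 3 \<or> n = 4" by arith
    then show ?thesis
      by (elim disjE) (simp_all add: r gen_def vec_eq_iff forall_7 row_mult_tmat_nth)
  next
    case 2
    then show ?thesis by (simp add: r gen_def row_mult_X1)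
  next
    case 3
    have "vec_of_list r v* gen n = ((vec_of_list r v* tmat 5 7) v* X1) v* tmat 5 7"
      using 3 by (simp add: gen_def vector_matrix_mul_assoc)
    also have "\<dots> = vec_of_list (gen_row n r)"
      using 3 by (simp add: r swap57 row_mult_X1 vec_eq_iff forall_7 algebra_simps)
    finally show ?thesis .
  next
    case 4
    then show ?thesis by (simp add: r gen_def)
  qed
qed

primrec word_mat :: "nat list \<Rightarrow> mat7" where
  "word_mat [] = mat 1"
| "word_mat (n # w) = gen n ** word_mat w"

primrec word_row :: "nat list \<Rightarrow> int list \<Rightarrow> int list" where
  "word_row [] r = r"
| "word_row (n # w) r = word_row w (gen_row n r)"

lemma word_mat_append: "word_mat (u @ v) = word_mat u ** word_mat v"
  by (induction u) (simp_all add: matrix_mul_assoc)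

lemma length_word_row [simp]: "length (word_row w r) = length r"
  by (induction w arbitrary: r) simp_all

lemma row_mult_word_mat:
  "length r = 7 \<Longrightarrow> vec_of_list r v* word_mat w = vec_of_list (word_row w r)"
  by (induction w arbitrary: r) (simp_all add: vector_matrix_mul_assoc[symmetric] row_mult_gen)

lemma word_mat_row1: "word_mat w $ 1 = vec_of_list (word_row w (unit_list 0))"
  using e1_row_mult[of "word_mat w"] row_mult_word_mat[of "unit_list 0" w] by simp

definition word_rows :: "nat list \<Rightarrow> int list list" where
  "word_rows w = map (\<lambda>k. word_row w (unit_list k)) [0..<7]"

lemma word_mat_eq_rows: "word_mat w = mat_of_rows (word_rows w)"
proof -
  have "word_mat w $ i = vec_of_list (word_row w (unit_list (idx i)))" for i
    using unit_list_row_mult[of i "word_mat w"] row_mult_word_mat[of "unit_list (idx i)" w] by simp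
  then show ?thesis by (simp add: vec_eq_iff word_rows_def)
qed

lemma word_mat_eqI: "word_rows u = word_rows v \<Longrightarrow> word_mat u = word_mat v"
  by (simp add: word_mat_eq_rows)

lemma gen_row_involutive: "length r = 7 \<Longrightarrow> gen_row n (gen_row n r) = r"
  by (erule length_7E) simp

lemma gen_involutive: "gen n ** gen n = mat 1"
proof (rule mat_eq_by_unit_rows)
  fix k :: nat
  show "vec_of_list (unit_list k) v* (gen n ** gen n) = vec_of_list (unit_list k) v* mat 1"
    by (simp add: vector_matrix_mul_assoc[symmetric] row_mult_gen gen_row_involutive)
qed

lemma matrix_inv_involution:
  fixes A :: "'a::comm_ring_1^'n^'n"
  assumes "A ** A = mat 1"
  shows "matrix_inv A = A"
proof -
  have "A ** matrix_inv A = mat 1 \<and> matrix_inv A ** A = mat 1"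
    unfolding matrix_inv_def by (rule someI[of _ A]) (simp add: assms)
  then have "A ** matrix_inv A = mat 1" by simp
  have "matrix_inv A = (A ** A) ** matrix_inv A" by (simp add: assms)
  also have "\<dots> = A ** (A ** matrix_inv A)" by (simp only: matrix_mul_assoc)
  also have "\<dots> = A" by (simp add: \<open>A ** matrix_inv A = mat 1\<close>)
  finally show ?thesis .
qed

lemma gen_grp_gen_eq_words: "gen_grp (gen ` N) = {word_mat w | w. set w \<subseteq> N}"
proof (intro equalityI subsetI)
  fix x assume "x \<in> gen_grp (gen ` N)"
  then show "x \<in> {word_mat w | w. set w \<subseteq> N}"
  proof (induction rule: gen_grp.induct)
    case one
    show ?case by (auto intro!: exI[of _ "[]"])
  next
    case (base a)
    then obtain n where "n \<in> N" "a = gen n" by auto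
    then show ?case by (auto intro!: exI[of _ "[n]"])
  next
    case (inv a)
    then obtain n where "n \<in> N" "a = gen n" by auto
    then show ?case by (auto simp: matrix_inv_involution gen_involutive intro!: exI[of _ "[n]"])
  next
    case (mult a b)
    then obtain u v where "set u \<subseteq> N" "a = word_mat u" "set v \<subseteq> N" "b = word_mat v" by auto
    then show ?case by (auto intro!: exI[of _ "u @ v"] simp: word_mat_append)
  qed
next
  fix x assume "x \<in> {word_mat w | w. set w \<subseteq> N}"
  then obtain w where "set w \<subseteq> N" "x = word_mat w" by auto
  moreover have "set w \<subseteq> N \<Longrightarrow> word_mat w \<in> gen_grp (gen ` N)"
    by (induction w) (auto intro: gen_grp.intros)
  ultimately show "x \<in> gen_grp (gen ` N)" by simp
qed

lemma H1_words: "H1 = {word_mat w | w. set w \<subseteq> {0,1,2,3,4,5}}"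
proof -
  have "{tmat 1 2, tmat 2 3, tmat 3 4, tmat 5 6, tmat 6 7, X1} = gen ` {0,1,2,3,4,5}"
    by (simp add: gen_def insert_commute)
  then show ?thesis unfolding H1_def by (simp only: gen_grp_gen_eq_words)
qed

lemma GJ_words: "GJ = {word_mat w | w. set w \<subseteq> {1,2,3,4,5}}"
proof -
  have "{tmat 2 3, tmat 3 4, tmat 5 6, tmat 6 7, X1} = gen ` {1,2,3,4,5}"
    by (simp add: gen_def insert_commute)
  then show ?thesis unfolding GJ_def by (simp only: gen_grp_gen_eq_words)
qed

lemma GL_words: "GL = {word_mat w | w. set w \<subseteq> {0,1,2,4,6}}"
proof -
  have "{tmat 1 2, tmat 2 3, tmat 3 4, tmat 6 7, tmat 5 7 ** X1 ** tmat 5 7} = gen ` {0,1,2,4,6}"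
    by (simp add: gen_def insert_commute)
  then show ?thesis unfolding GL_def by (simp only: gen_grp_gen_eq_words)
qed

text \<open>Since (5 7) = (5 6)(6 7)(5 6), the generator (5 7) X1 (5 7) of GL lies in H1.\<close>
lemma gen6_eq_word: "gen 6 = word_mat [3,4,3,5,3,4,3]"
proof -
  have "word_mat [6] = word_mat [3,4,3,5,3,4,3]" by (rule word_mat_eqI) code_simp
  then show ?thesis by simp
qed

lemma word_mat_in_H1: "set w \<subseteq> {0,1,2,3,4,5,6} \<Longrightarrow> word_mat w \<in> H1"
proof (induction w)
  case Nil
  then show ?case unfolding H1_words by (auto intro!: exI[of _ "[]"])
next
  case (Cons n w)
  then obtain u where u: "set u \<subseteq> {0,1,2,3,4,5}" "word_mat w = word_mat u"
    unfolding H1_words by auto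
  show ?case
  proof (cases "n = 6")
    case True
    then have "word_mat (n # w) = word_mat ([3,4,3,5,3,4,3] @ u)"
      using u by (simp only: True word_mat.simps gen6_eq_word word_mat_append)
    then show ?thesis unfolding H1_words using u by (intro CollectI exI[of _ "[3,4,3,5,3,4,3] @ u"]) auto
  next
    case False
    then have "word_mat (n # w) = word_mat (n # u)" using u by simp
    then show ?thesis unfolding H1_words using u Cons.prems False
      by (intro CollectI exI[of _ "n # u"]) auto
  qed
qed

lemma GJ_subset_H1: "GJ \<subseteq> H1"
  unfolding GJ_words using word_mat_in_H1 by auto

lemma GL_subset_H1: "GL \<subseteq> H1"
  unfolding GL_words using word_mat_in_H1 by auto

subsection \<open>The central element\<close>

fun lform :: "int list \<Rightarrow> int list \<Rightarrow> int" where
  "lform [a1, a2, a3, a4, a5, a6, a7] [b1, b2, b3, b4, b5, b6, b7] =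
     - a1*b1 - a2*b2 - a3*b3 - a4*b4 + a5*(b6+b7) + a6*(b5+b7) + a7*(b5+b6)"
| "lform _ _ = 0"

fun lweight :: "int list \<Rightarrow> int" where
  "lweight [a, b, c, d, e, f, g] = a + b + c + d + 2*(e + f + g)"
| "lweight _ = 0"

lemma lform_gen_row:
  "length u = 7 \<Longrightarrow> length v = 7 \<Longrightarrow> lform (gen_row n u) (gen_row n v) = lform u v"
  by (elim length_7E) (simp add: algebra_simps)

lemma lweight_gen_row: "length r = 7 \<Longrightarrow> lweight (gen_row n r) = lweight r"
  by (elim length_7E) (simp add: algebra_simps)

lemma lform_word_row:
  "length u = 7 \<Longrightarrow> length v = 7 \<Longrightarrow> lform (word_row w u) (word_row w v) = lform u v"
  by (induction w arbitrary: u v) (simp_all add: lform_gen_row)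

lemma lweight_word_row: "length r = 7 \<Longrightarrow> lweight (word_row w r) = lweight r"
  by (induction w arbitrary: r) (simp_all add: lweight_gen_row)

definition zword :: "nat list" where
  "zword = [0,1,3,4,3,5,0,2,1,3,4,5,0,2,3,4,5,0,2,3,5,2]"

lemma zword_in_H1: "word_mat zword \<in> H1"
  by (rule word_mat_in_H1) (simp add: zword_def)

lemma zword_commutes_gen:
  assumes "n \<le> 5"
  shows "word_mat zword ** gen n = gen n ** word_mat zword"
proof -
  have "list_all (\<lambda>n. word_rows (zword @ [n]) = word_rows (n # zword)) [0..<6]" by code_simp
  then have "word_rows (zword @ [n]) = word_rows (n # zword)"
    using assms by (simp add: list_all_iff)
  then have "word_mat (zword @ [n]) = word_mat (n # zword)" by (rule word_mat_eqI)
  then show ?thesis by (simp add: word_mat_append)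
qed

lemma zword_central: "g \<in> H1 \<Longrightarrow> g ** word_mat zword = word_mat zword ** g"
proof -
  have "set w \<subseteq> {0,1,2,3,4,5} \<Longrightarrow> word_mat w ** word_mat zword = word_mat zword ** word_mat w" for w
  proof (induction w)
    case (Cons n w)
    have "n \<le> 5" using Cons.prems by auto
    then have comm: "gen n ** word_mat zword = word_mat zword ** gen n"
      by (simp add: zword_commutes_gen)
    have "word_mat (n # w) ** word_mat zword = gen n ** (word_mat w ** word_mat zword)"
      by (simp add: matrix_mul_assoc)
    also have "\<dots> = (gen n ** word_mat zword) ** word_mat w"
      using Cons by (simp add: matrix_mul_assoc)
    also have "\<dots> = word_mat zword ** word_mat (n # w)"
      by (simp add: comm matrix_mul_assoc)
    finally show ?case .
  qed simp
  then show "g \<in> H1 \<Longrightarrow> ?thesis" unfolding H1_words by auto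
qed

lemma zword_involutive: "word_mat zword ** word_mat zword = mat 1"
proof -
  have "word_mat (zword @ zword) = word_mat []" by (rule word_mat_eqI) code_simp
  then show ?thesis by (simp add: word_mat_append)
qed

lemma zword_row1: "word_row zword (unit_list 0) = [-2,-1,-1,-1,1,1,1]"
  by code_simp

lemma zword_neq_1: "word_mat zword \<noteq> mat 1"
proof
  assume "word_mat zword = mat 1"
  then have "word_mat zword $ 1 = word_mat [] $ 1" by simp
  then have "vec_of_list [-2,-1,-1,-1,1,1,1] = vec_of_list (unit_list 0)"
    by (simp only: word_mat_row1 zword_row1 word_row.simps)
  then have "[-2,-1,-1,-1,1,1,1] = unit_list 0" by (simp add: vec_of_list_inject)
  moreover have "[-2,-1,-1,-1,1,1,1] \<noteq> unit_list 0" by code_simp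
  ultimately show False by simp
qed

lemma central_row1_fixed:
  assumes central: "\<forall>g\<in>H1. g ** z = z ** g" and n: "n \<in> {1,2,3,4,5}"
  shows "z $ 1 v* gen n = z $ 1"
proof -
  have "gen n \<in> H1" using n word_mat_in_H1[of "[n]"] by auto
  have "gen_row n (unit_list 0) = unit_list 0" using n by (auto simp: unit_list_0)
  then have e1: "vec_of_list (unit_list 0) v* gen n = vec_of_list (unit_list 0)"
    by (simp only: row_mult_gen length_unit_list)
  have "z $ 1 v* gen n = (vec_of_list (unit_list 0) v* z) v* gen n" by (simp only: e1_row_mult)
  also have "\<dots> = (vec_of_list (unit_list 0) v* gen n) v* z"
    using central \<open>gen n \<in> H1\<close> by (simp add: vector_matrix_mul_assoc)
  also have "\<dots> = z $ 1" by (simp only: e1) (simp only: e1_row_mult)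
  finally show ?thesis .
qed

lemma row_fixed_by_GJ_gens:
  assumes fixed: "\<And>n. n \<in> {1,2,3,4,5} \<Longrightarrow> gen_row n r = r" and r: "r = [a, b, c, d, e, f, g]"
  shows "r = [a, -e, -e, -e, e, e, e]"
proof -
  have nth: "gen_row n r ! k = r ! k" if "n \<in> {1,2,3,4,5}" for n k
    using fixed[OF that] by simp
  have "c = b" using nth[of 1 1] by (simp add: r)
  moreover have "d = c" using nth[of 2 2] by (simp add: r)
  moreover have "f = e" using nth[of 3 4] by (simp add: r)
  moreover have "g = f" using nth[of 4 5] by (simp add: r)
  moreover have "b = -c-f-g" using nth[of 5 1] by (simp add: r)
  ultimately show ?thesis unfolding r by simp
qed

lemma central_row1_cases:
  assumes "z \<in> H1" and central: "\<forall>g\<in>H1. g ** z = z ** g"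
  shows "z $ 1 = mat 1 $ 1 \<or> z $ 1 = word_mat zword $ 1"
proof -
  obtain w where z: "z = word_mat w" using assms(1) unfolding H1_words by auto
  define r where "r = word_row w (unit_list 0)"
  have r7: "length r = 7" by (simp add: r_def)
  have z1: "z $ 1 = vec_of_list r" by (simp add: z r_def word_mat_row1)
  have "gen_row n r = r" if "n \<in> {1,2,3,4,5}" for n
    using central_row1_fixed[OF central that] by (simp add: z1 row_mult_gen r7 vec_of_list_inject)
  moreover obtain a b c d e f g where "r = [a, b, c, d, e, f, g]" using r7 by (rule length_7E)
  ultimately have r: "r = [a, -e, -e, -e, e, e, e]" by (rule row_fixed_by_GJ_gens)
  have "lweight r = lweight (unit_list 0)"
    by (simp add: r_def lweight_word_row)
  then have a: "a = 1 - 3 * e" by (simp add: r unit_list_0)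
  have "lform r r = lform (unit_list 0) (unit_list 0)"
    by (simp add: r_def lform_word_row)
  then have "- (a * a) + 3 * (e * e) = -1" by (simp add: r unit_list_0 algebra_simps)
  moreover have "6 * (e * (1 - e)) = - (a * a) + 3 * (e * e) + 1"
    by (simp add: a algebra_simps)
  ultimately have "6 * (e * (1 - e)) = 0" by simp
  then have "e = 0 \<or> e = 1" by simp
  then show ?thesis
    using zword_row1 word_mat_row1[of "[]"] by (auto simp: z1 r a word_mat_row1 unit_list_0)
qed

definition basis_words :: "nat list list" where
  "basis_words = [[], [0,5,2,3,4,5,3], [0,5,2,3,4,5], [0,5,2,3,5], [0], [0,1], [0,1,5,0,3,4,5,2,3,5,0]]"

definition basis_rows :: "int list list" where
  "basis_rows = map (\<lambda>w. word_row w (unit_list 0)) basis_words"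

definition basis_rows_inv :: "int list list" where
  "basis_rows_inv = [[1,0,0,0,0,0,0], [0,0,0,0,1,0,0], [0,0,0,0,0,1,0], [4,-1,-1,-1,-1,-1,2],
     [2,-1,0,0,0,0,1], [2,0,-1,0,0,0,1], [2,0,0,-1,0,0,1]]"

text \<open>The first rows e1 b_k of the elements b_k = word_mat (basis_words ! k) of H1 form a basis
  (basis_rows_inv inverts it), and e1 b_k z = e1 z b_k.\<close>
lemma commuting_eq_of_row1:
  assumes z: "\<forall>g\<in>H1. g ** z = z ** g" and z': "\<forall>g\<in>H1. g ** z' = z' ** g"
    and row1: "z $ 1 = z' $ 1"
  shows "z = z'"
proof -
  let ?R = "mat_of_rows basis_rows"
  have words: "length basis_words = 7 \<and> list_all (\<lambda>w. set w \<subseteq> {0,1,2,3,4,5}) basis_words"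
    by code_simp
  have R_row: "?R $ i = vec_of_list (unit_list 0) v* word_mat (basis_words ! idx i)" for i
    using words by (simp add: basis_rows_def row_mult_word_mat)
  have R_mult: "(?R ** y) $ i = y $ 1 v* word_mat (basis_words ! idx i)"
    if "\<forall>g\<in>H1. g ** y = y ** g" for y i
  proof -
    have "set (basis_words ! idx i) \<subseteq> {0,1,2,3,4,5}"
      using words idx_less[of i] by (simp add: list_all_length)
    then have "word_mat (basis_words ! idx i) \<in> H1" by (intro word_mat_in_H1) auto
    have "(?R ** y) $ i = (vec_of_list (unit_list 0) v* word_mat (basis_words ! idx i)) v* y"
      by (simp only: row_of_mult R_row)
    also have "\<dots> = vec_of_list (unit_list 0) v* (y ** word_mat (basis_words ! idx i))"
      using that \<open>word_mat (basis_words ! idx i) \<in> H1\<close> by (simp add: vector_matrix_mul_assoc)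
    also have "\<dots> = y $ 1 v* word_mat (basis_words ! idx i)"
      by (simp only: vector_matrix_mul_assoc[symmetric] e1_row_mult)
    finally show ?thesis .
  qed
  have "lmult basis_rows_inv basis_rows = map unit_list [0..<7]" by code_simp
  then have inv: "mat_of_rows basis_rows_inv ** ?R = mat 1"
    by (simp add: mat_of_rows_mult mat_1_eq_rows)
  have "?R ** z = ?R ** z'"
    using R_mult[OF z] R_mult[OF z'] row1 by (simp add: vec_eq_iff)
  then have "mat_of_rows basis_rows_inv ** (?R ** z) = mat_of_rows basis_rows_inv ** (?R ** z')"
    by simp
  then show ?thesis by (simp add: matrix_mul_assoc inv)
qed

lemma Z1_eq_word: "Z1 = word_mat zword"
  unfolding Z1_def
proof (rule the_equality)
  show "word_mat zword \<in> H1 \<and> word_mat zword \<noteq> mat 1 \<and> (\<forall>g\<in>H1. g ** word_mat zword = word_mat zword ** g)"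
    using zword_in_H1 zword_neq_1 zword_central by blast
next
  fix z assume z: "z \<in> H1 \<and> z \<noteq> mat 1 \<and> (\<forall>g\<in>H1. g ** z = z ** g)"
  from z central_row1_cases show "z = word_mat zword"
    using commuting_eq_of_row1[of z "mat 1"] commuting_eq_of_row1[of z "word_mat zword"]
      zword_central by auto
qed

lemma Z1_involutive: "Z1 ** Z1 = mat 1"
  by (simp add: Z1_eq_word zword_involutive)

lemma Z1_central: "g \<in> H1 \<Longrightarrow> g ** Z1 = Z1 ** g"
  by (simp add: Z1_eq_word zword_central)

subsection \<open>J cosets\<close>

definition dotv :: "vec7 \<Rightarrow> vec7 \<Rightarrow> complex" where
  "dotv u x = (\<Sum>i\<in>UNIV. u $ i * x $ i)"

lemma mult_vec_nth: "(A *v x) $ i = dotv (A $ i) x"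
  by (simp add: matrix_vector_mult_def dotv_def)

lemma dotv_vec_of_list: "dotv (vec_of_list u) x = (\<Sum>i\<in>UNIV. of_int (u ! idx i) * x $ i)"
  by (simp add: dotv_def)

lemma eq_of_dotv_on_V:
  assumes "\<forall>x\<in>Vset. dotv u x = dotv u' x"
  shows "u = u'"
proof -
  have on: "dotv u (vec_of_list p) = dotv u' (vec_of_list p)" if "vec_of_list p \<in> Vset" for p
    using assms that by blast
  have V: "vec_of_list [0,0,0,0,1,0,0] \<in> Vset" "vec_of_list [0,0,0,0,0,1,0] \<in> Vset"
    "vec_of_list [0,0,0,0,0,0,1] \<in> Vset" "vec_of_list [1,0,0,0,2,0,0] \<in> Vset"
    "vec_of_list [0,1,0,0,2,0,0] \<in> Vset" "vec_of_list [0,0,1,0,2,0,0] \<in> Vset"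
    "vec_of_list [0,0,0,1,2,0,0] \<in> Vset"
    by (simp_all add: Vset_def)
  have 5: "u $ 5 = u' $ 5" using on[OF V(1)] by (simp add: dotv_def sum_UNIV_7)
  moreover have "u $ 6 = u' $ 6" using on[OF V(2)] by (simp add: dotv_def sum_UNIV_7)
  moreover have "u $ 7 = u' $ 7" using on[OF V(3)] by (simp add: dotv_def sum_UNIV_7)
  moreover have "u $ 1 = u' $ 1" using on[OF V(4)] 5 by (simp add: dotv_def sum_UNIV_7)
  moreover have "u $ 2 = u' $ 2" using on[OF V(5)] 5 by (simp add: dotv_def sum_UNIV_7)
  moreover have "u $ 3 = u' $ 3" using on[OF V(6)] 5 by (simp add: dotv_def sum_UNIV_7)
  moreover have "u $ 4 = u' $ 4" using on[OF V(7)] 5 by (simp add: dotv_def sum_UNIV_7)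
  ultimately show ?thesis by (simp add: vec_eq_iff forall_7)
qed

lemma mat_eq_on_V:
  assumes "\<forall>x\<in>Vset. (A :: mat7) *v x = B *v x"
  shows "A = B"
proof -
  have "A $ i = B $ i" for i
    using assms by (intro eq_of_dotv_on_V) (simp add: mult_vec_nth[symmetric])
  then show ?thesis by (simp add: vec_eq_iff)
qed

lemma dotv_unit_list: "k < 7 \<Longrightarrow> dotv (vec_of_list (unit_list k)) x = x $ of_nat (k + 1)"
proof -
  assume k: "k < 7"
  have "dotv (vec_of_list (unit_list k)) x = (\<Sum>i\<in>UNIV. if i = of_nat (k + 1) then x $ i else 0)"
    unfolding dotv_vec_of_list by (rule sum.cong) (auto simp: unit_list_def idx_eq_iff_of_nat[OF k])
  then show ?thesis by simp
qed

lemma dotv_add: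
  "length a = 7 \<Longrightarrow> length b = 7 \<Longrightarrow>
    dotv (vec_of_list (map2 (+) a b)) x = dotv (vec_of_list a) x + dotv (vec_of_list b) x"
  unfolding dotv_vec_of_list by (simp add: sum.distrib[symmetric] algebra_simps)

lemma dotv_diff:
  "length a = 7 \<Longrightarrow> length b = 7 \<Longrightarrow>
    dotv (vec_of_list (map2 (-) a b)) x = dotv (vec_of_list a) x - dotv (vec_of_list b) x"
  unfolding dotv_vec_of_list by (simp add: sum_subtractf[symmetric] algebra_simps)

text \<open>On V the constant function 1 is the linear form with coefficients one_on_V.\<close>
definition one_on_V :: "int list" where
  "one_on_V = [-1,-1,-1,-1,1,1,1]"

lemma dotv_one_on_V: "x \<in> Vset \<Longrightarrow> dotv (vec_of_list one_on_V) x = 1"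
  by (simp add: dotv_vec_of_list sum_UNIV_7 one_on_V_def Vset_def algebra_simps)

definition jrow :: "jlab \<Rightarrow> int list" where
  "jrow l = (case l of (p, r, q) \<Rightarrow>
     (let A = unit_list r; E = (if q = 0 then one_on_V else unit_list (q + 3)) in
      if p then map2 (+) one_on_V (map2 (-) A E) else map2 (-) E A))"

lemma length_jrow [simp]: "length (jrow l) = 7"
  by (simp add: jrow_def one_on_V_def Let_def split: prod.split)

lemma jfun_eq_dotv:
  assumes l: "valid_jlab l" and x: "x \<in> Vset"
  shows "jfun l x = dotv (vec_of_list (jrow l)) x"
proof -
  obtain p r q where lpq: "l = (p, r, q)" by (cases l)
  then have rq: "r \<le> 3" "q \<le> 3" using l by (auto simp: valid_jlab_def)
  have len: "length one_on_V = 7" by (simp add: one_on_V_def)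
  have A: "Acoord r x = dotv (vec_of_list (unit_list r)) x"
    using rq by (simp add: Acoord_def dotv_unit_list)
  have E: "Ecoord q x = dotv (vec_of_list (if q = 0 then one_on_V else unit_list (q + 3))) x"
  proof (cases "q = 0")
    case True
    then show ?thesis by (simp add: Ecoord_def dotv_one_on_V x)
  next
    case False
    have "dotv (vec_of_list (unit_list (q + 3))) x = x $ of_nat (q + 4)"
      using dotv_unit_list[of "q + 3" x] rq by (simp add: add.commute)
    then show ?thesis using False by (simp add: Ecoord_def)
  qed
  have lenE: "length (if q = 0 then one_on_V else unit_list (q + 3)) = 7" by (simp add: len)
  show ?thesis unfolding lpq
    by (cases p) (simp_all add: jfun_def jrow_def Let_def dotv_add dotv_diff len lenE dotv_one_on_V x A E)
qed

lemma Jcoset_eq_row1: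
  assumes l: "valid_jlab l"
  shows "Jcoset l = {\<alpha> \<in> H1. \<alpha> $ 1 = vec_of_list (jrow l)}"
proof -
  have "(\<forall>x\<in>Vset. (\<alpha> *v x) $ 1 = jfun l x) \<longleftrightarrow> (\<forall>x\<in>Vset. dotv (\<alpha> $ 1) x = dotv (vec_of_list (jrow l)) x)"
    for \<alpha> :: mat7
    by (simp add: mult_vec_nth jfun_eq_dotv[OF l])
  also have "\<dots> \<alpha> \<longleftrightarrow> \<alpha> $ 1 = vec_of_list (jrow l)" for \<alpha> :: mat7
    by (auto intro: eq_of_dotv_on_V)
  finally show ?thesis unfolding Jcoset_def by blast
qed

lemma GJ_row1: "g \<in> GJ \<Longrightarrow> g $ 1 = vec_of_list (unit_list 0)"
proof -
  have "set w \<subseteq> {1,2,3,4,5} \<Longrightarrow> word_row w (unit_list 0) = unit_list 0" for w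
    by (induction w) (auto simp: unit_list_0)
  then show "g \<in> GJ \<Longrightarrow> ?thesis" unfolding GJ_words by (auto simp: word_mat_row1)
qed

lemma GJ_mult_row1: "g \<in> GJ \<Longrightarrow> (g ** A) $ 1 = A $ 1"
  by (simp add: row_of_mult GJ_row1 e1_row_mult)

lemma rcos_GJ_row1: "\<beta> \<in> rcos GJ \<alpha> \<Longrightarrow> \<beta> $ 1 = \<alpha> $ 1"
  unfolding rcos_def using GJ_mult_row1 by auto

definition jlabs :: "jlab list" where
  "jlabs = [(p, r, q). p \<leftarrow> [True, False], r \<leftarrow> [0..<4], q \<leftarrow> [0..<4]]"

lemma valid_jlab_iff: "valid_jlab l \<longleftrightarrow> l \<in> set jlabs"
proof -
  have "valid_jlab (p, r, q) \<longleftrightarrow> (p, r, q) \<in> set jlabs" for p r q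
    by (cases p) (auto simp: valid_jlab_def jlabs_def image_iff)
  then show ?thesis by (cases l) simp
qed

lemma jrow_inj: "valid_jlab l \<Longrightarrow> valid_jlab l' \<Longrightarrow> jrow l = jrow l' \<Longrightarrow> l = l'"
proof -
  have "distinct (map jrow jlabs)" by code_simp
  then show "valid_jlab l \<Longrightarrow> valid_jlab l' \<Longrightarrow> jrow l = jrow l' \<Longrightarrow> l = l'"
    by (simp add: valid_jlab_iff distinct_map inj_on_def)
qed

definition jreps :: "(jlab \<times> nat list) list" where
  "jreps = [
    ((True,0,0),[]), ((True,1,0),[0]), ((True,2,0),[0,1]), ((False,2,1),[0,5]),
    ((True,3,0),[0,1,2]), ((False,1,1),[0,1,5]), ((False,3,1),[0,5,2]), ((False,2,2),[0,5,3]),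
    ((False,0,1),[0,1,5,0]), ((False,1,2),[0,1,5,3]), ((False,3,2),[0,5,2,3]),
    ((False,2,3),[0,5,3,4]), ((False,0,2),[0,1,5,0,3]), ((False,1,3),[0,1,5,3,4]),
    ((False,3,3),[0,5,2,3,4]), ((True,0,3),[0,5,2,3,5]), ((False,0,3),[0,1,5,0,3,4]),
    ((True,3,3),[0,1,5,0,3,5]), ((True,0,2),[0,5,2,3,4,5]), ((True,1,3),[0,5,2,3,5,0]),
    ((True,3,2),[0,1,5,0,3,4,5]), ((True,2,3),[0,1,5,0,3,5,2]), ((True,1,2),[0,5,2,3,4,5,0]),
    ((True,0,1),[0,5,2,3,4,5,3]), ((True,2,2),[0,1,5,0,3,4,5,2]),
    ((True,3,1),[0,1,5,0,3,4,5,3]), ((True,1,1),[0,5,2,3,4,5,0,3]),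
    ((True,2,1),[0,1,5,0,3,4,5,2,3]), ((False,2,0),[0,5,2,3,4,5,0,3,5]),
    ((False,1,0),[0,1,5,0,3,4,5,2,3,5]), ((False,3,0),[0,5,2,3,4,5,0,3,5,2]),
    ((False,0,0),[0,1,5,0,3,4,5,2,3,5,0])]"

definition jrep :: "jlab \<Rightarrow> nat list" where
  "jrep l = the (map_of jreps l)"

text \<open>A Schreier certificate for the transversal jreps of GJ in H1: entry n of row i is a pair
  (w, k) with t_i gen_n = w t_k, where t_i is the word of the i-th entry of jreps and w is a word
  in the generators of GJ.\<close>
definition jtrans :: "(nat list \<times> nat) list list" where
  "jtrans = [
    [([],1), ([1],0), ([2],0), ([3],0), ([4],0), ([5],0)],
    [([],0), ([],2), ([2],1), ([3],1), ([4],1), ([],3)],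
    [([1],2), ([],1), ([],4), ([3],2), ([4],2), ([],5)],
    [([5],3), ([],5), ([],6), ([],7), ([4],3), ([],1)],
    [([1],4), ([2],4), ([],2), ([3],4), ([4],4), ([1,2,5,2,1],4)],
    [([],8), ([],3), ([1,2,5,2,1],5), ([],9), ([4],5), ([],2)],
    [([5],6), ([1,2,5,2,1],6), ([],3), ([],10), ([4],6), ([2],6)],
    [([5],7), ([],9), ([],10), ([],3), ([],11), ([3],7)],
    [([],5), ([5],8), ([1,2,5,2,1],8), ([],12), ([4],8), ([1],8)],
    [([],12), ([],7), ([1,2,5,2,1],9), ([],5), ([],13), ([3],9)],
    [([5],10), ([1,2,5,2,1],10), ([],7), ([],6), ([],14), ([],15)],
    [([5],11), ([],13), ([],14), ([4],11), ([],7), ([3],11)],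
    [([],9), ([5],12), ([1,2,5,2,1],12), ([],8), ([],16), ([],17)],
    [([],16), ([],11), ([1,2,5,2,1],13), ([4],13), ([],9), ([3],13)],
    [([5],14), ([1,2,5,2,1],14), ([],11), ([4],14), ([],10), ([],18)],
    [([],19), ([1,2,5,2,1],15), ([3],15), ([2],15), ([],18), ([],10)],
    [([],13), ([5],16), ([1,2,5,2,1],16), ([4],16), ([],12), ([],20)],
    [([3],17), ([5],17), ([],21), ([1],17), ([],20), ([],12)],
    [([],22), ([1,2,5,2,1],18), ([3],18), ([],23), ([],15), ([],14)],
    [([],15), ([1,2,1,3,5,3],21), ([3],19), ([2],19), ([],22), ([5],19)],
    [([3],20), ([5],20), ([],24), ([],25), ([],17), ([],16)],
    [([3],21), ([1,3,5,2,1,3],19), ([],17), ([1],21), ([],24), ([1,2,5,2,1],21)],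
    [([],18), ([1,2,1,3,5,3],24), ([3],22), ([],26), ([],19), ([5],22)],
    [([],26), ([1,2,5,2,1],23), ([3],23), ([],18), ([2],23), ([4],23)],
    [([3],24), ([1,3,5,2,1,3],22), ([],20), ([],27), ([],21), ([1,2,5,2,1],24)],
    [([3],25), ([5],25), ([],27), ([],20), ([1],25), ([4],25)],
    [([],23), ([1,2,1,3,5,3],27), ([3],26), ([],22), ([2],26), ([],28)],
    [([3],27), ([1,3,5,2,1,3],26), ([],25), ([],24), ([1],27), ([],29)],
    [([4],28), ([1,2,1,3,5,3],29), ([],30), ([5],28), ([2],28), ([],26)],
    [([],31), ([1,3,5,2,1,3],28), ([4],29), ([1,2,5,2,1],29), ([1],29), ([],27)],
    [([4],30), ([1,2,4,3,5,2,1,3,4],30), ([],28), ([5],30), ([2],30), ([3],30)],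
    [([],29), ([4,3,5,3,4],31), ([4],31), ([1,2,5,2,1],31), ([1],31), ([3],31)]]"

lemma jreps_ok:
  "list_all (\<lambda>(l, t). set t \<subseteq> {0,1,2,3,4,5} \<and> word_row t (unit_list 0) = jrow l) jreps
   \<and> set (map fst jreps) = set jlabs \<and> distinct (map fst jreps)"
  by code_simp

lemma jtrans_ok:
  "list_all2 (\<lambda>(l, t) row. length row = 6 \<and> list_all (\<lambda>(n, w, k). k < length jreps
      \<and> set w \<subseteq> {1,2,3,4,5} \<and> word_rows (t @ [n]) = word_rows (w @ snd (jreps ! k)))
      (zip [0..<6] row)) jreps jtrans"
  by code_simp

lemma jreps_entry:
  assumes lt: "(l, t) \<in> set jreps"
  shows "valid_jlab l \<and> word_mat t \<in> H1 \<and> word_mat t $ 1 = vec_of_list (jrow l)"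
proof -
  have "\<forall>(l, t) \<in> set jreps. set t \<subseteq> {0,1,2,3,4,5} \<and> word_row t (unit_list 0) = jrow l"
    using jreps_ok unfolding list_all_iff by (rule conjunct1)
  then have t: "set t \<subseteq> {0,1,2,3,4,5}" "word_row t (unit_list 0) = jrow l" using lt by auto
  have "l \<in> set (map fst jreps)" using lt by force
  then have "valid_jlab l" using jreps_ok by (simp only: valid_jlab_iff)
  moreover have "word_mat t \<in> H1" using t(1) by (intro word_mat_in_H1) auto
  ultimately show ?thesis using t(2) by (simp add: word_mat_row1)
qed

lemma jrep_in_jreps: "valid_jlab l \<Longrightarrow> (l, jrep l) \<in> set jreps"
proof -
  assume "valid_jlab l"
  then have "l \<in> fst ` set jreps" using jreps_ok by (simp add: valid_jlab_iff)
  then obtain t where "map_of jreps l = Some t" by (metis map_of_eq_None_iff option.exhaust)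
  then show ?thesis by (simp add: jrep_def map_of_SomeD)
qed

lemma jrep_unique: "(l, t) \<in> set jreps \<Longrightarrow> jrep l = t"
  unfolding jrep_def using jreps_ok by (simp add: map_of_is_SomeI)

lemma jtrans_step:
  assumes "t \<in> set (map snd jreps)" and "n < 6"
  obtains w t' where "word_mat (t @ [n]) = word_mat (w @ t')" and "set w \<subseteq> {1,2,3,4,5}"
    and "t' \<in> set (map snd jreps)"
proof -
  obtain i where i: "i < length jreps" and t: "t = snd (jreps ! i)"
    using assms(1) by (auto simp: in_set_conv_nth)
  obtain w k where wk: "jtrans ! i ! n = (w, k)" by (cases "jtrans ! i ! n")
  have "(\<lambda>(l, t) row. length row = 6 \<and> list_all (\<lambda>(n, w, k). k < length jreps
      \<and> set w \<subseteq> {1,2,3,4,5} \<and> word_rows (t @ [n]) = word_rows (w @ snd (jreps ! k)))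
      (zip [0..<6] row)) (jreps ! i) (jtrans ! i)"
    by (rule list_all2_nthD[OF jtrans_ok i])
  moreover have "(n, w, k) \<in> set (zip [0..<6] (jtrans ! i))" if "length (jtrans ! i) = 6"
    using that assms(2) wk by (auto simp: in_set_zip intro!: exI[of _ n])
  ultimately have "k < length jreps" "set w \<subseteq> {1,2,3,4,5}"
    "word_rows (t @ [n]) = word_rows (w @ snd (jreps ! k))"
    using t by (auto simp: list_all_iff split: prod.splits)
  then show ?thesis by (intro that[of w "snd (jreps ! k)"]) (auto intro: word_mat_eqI)
qed

lemma H1_subset_GJ_jreps: "H1 \<subseteq> {g ** word_mat t | g t. g \<in> GJ \<and> t \<in> set (map snd jreps)}"
  (is "_ \<subseteq> ?U")
proof -
  have step: "u ** gen n \<in> ?U" if "u \<in> ?U" "n < 6" for u n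
  proof -
    obtain g t where g: "g \<in> GJ" and t: "t \<in> set (map snd jreps)" and u: "u = g ** word_mat t"
      using \<open>u \<in> ?U\<close> by blast
    obtain w t' where tr: "word_mat (t @ [n]) = word_mat (w @ t')"
      and w: "set w \<subseteq> {1,2,3,4,5}" and t': "t' \<in> set (map snd jreps)"
      using jtrans_step[OF t \<open>n < 6\<close>] by blast
    from tr have "u ** gen n = (g ** word_mat w) ** word_mat t'"
      by (simp add: u word_mat_append matrix_mul_assoc[symmetric])
    moreover have "word_mat w \<in> GJ" using w unfolding GJ_words by blast
    then have "g ** word_mat w \<in> GJ" using g unfolding GJ_def by (rule gen_grp.mult[rotated])
    ultimately show ?thesis using t' by blast
  qed
  have closed: "set w \<subseteq> {0,1,2,3,4,5} \<Longrightarrow> u \<in> ?U \<Longrightarrow> u ** word_mat w \<in> ?U" for u w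
  proof (induction w arbitrary: u)
    case (Cons n w)
    have n: "n < 6" and w: "set w \<subseteq> {0,1,2,3,4,5}" using Cons.prems(1) by auto
    have "u ** gen n \<in> ?U" by (rule step[OF Cons.prems(2) n])
    then have "(u ** gen n) ** word_mat w \<in> ?U" by (rule Cons.IH[OF w])
    then show ?case by (simp only: word_mat.simps matrix_mul_assoc)
  qed simp
  have "((True, 0, 0), []) \<in> set jreps" by (simp add: jreps_def)
  then have "[] \<in> set (map snd jreps)" by force
  moreover have "mat 1 \<in> GJ" unfolding GJ_def by (rule gen_grp.one)
  moreover have "mat 1 = mat 1 ** word_mat []" by simp
  ultimately have one: "mat 1 \<in> ?U" by blast
  show ?thesis
  proof
    fix x assume "x \<in> H1"
    then obtain w where "set w \<subseteq> {0,1,2,3,4,5}" "x = word_mat w" unfolding H1_words by blast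
    then show "x \<in> ?U" using closed[OF _ one] by simp
  qed
qed

lemma Jcoset_eq_rcos: "valid_jlab l \<Longrightarrow> Jcoset l = rcos GJ (word_mat (jrep l))"
proof (intro equalityI subsetI)
  fix \<alpha> assume l: "valid_jlab l" and "\<alpha> \<in> Jcoset l"
  then have "\<alpha> \<in> H1" and \<alpha>1: "\<alpha> $ 1 = vec_of_list (jrow l)" using Jcoset_eq_row1 by auto
  then obtain g t where g: "g \<in> GJ" and "t \<in> set (map snd jreps)" and \<alpha>: "\<alpha> = g ** word_mat t"
    using H1_subset_GJ_jreps by blast
  then obtain l' where lt: "(l', t) \<in> set jreps" by auto
  have "vec_of_list (jrow l) = vec_of_list (jrow l')"
    using \<alpha>1 jreps_entry[OF lt] by (simp add: \<alpha> GJ_mult_row1[OF g])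
  then have "l = l'" using jrow_inj l jreps_entry[OF lt] by (simp add: vec_of_list_inject)
  then show "\<alpha> \<in> rcos GJ (word_mat (jrep l))"
    using \<alpha> g jrep_unique[OF lt] unfolding rcos_def by blast
next
  fix \<alpha> assume l: "valid_jlab l" and "\<alpha> \<in> rcos GJ (word_mat (jrep l))"
  then obtain g where g: "g \<in> GJ" and \<alpha>: "\<alpha> = g ** word_mat (jrep l)" unfolding rcos_def by blast
  have rep: "word_mat (jrep l) \<in> H1" "word_mat (jrep l) $ 1 = vec_of_list (jrow l)"
    using jreps_entry[OF jrep_in_jreps[OF l]] by auto
  have "\<alpha> \<in> H1" using \<alpha> g GJ_subset_H1 rep(1) unfolding H1_def by (blast intro: gen_grp.mult)
  moreover have "\<alpha> $ 1 = vec_of_list (jrow l)" by (simp add: \<alpha> GJ_mult_row1[OF g] rep(2))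
  ultimately show "\<alpha> \<in> Jcoset l" using Jcoset_eq_row1[OF l] by blast
qed

lemma Jcoset_in_Jcosets: "valid_jlab l \<Longrightarrow> Jcoset l \<in> Jcosets"
  unfolding Jcosets_def using Jcoset_eq_rcos jreps_entry[OF jrep_in_jreps] by blast

lemma Jcoset_inj: "valid_jlab l \<Longrightarrow> valid_jlab l' \<Longrightarrow> Jcoset l = Jcoset l' \<Longrightarrow> l = l'"
proof -
  assume l: "valid_jlab l" and l': "valid_jlab l'" and eq: "Jcoset l = Jcoset l'"
  have "word_mat (jrep l) \<in> Jcoset l"
    using jreps_entry[OF jrep_in_jreps[OF l]] Jcoset_eq_row1[OF l] by blast
  then have "vec_of_list (jrow l) = vec_of_list (jrow l')"
    using eq Jcoset_eq_row1[OF l'] jreps_entry[OF jrep_in_jreps[OF l]] by auto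
  then show "l = l'" using jrow_inj l l' by (simp add: vec_of_list_inject)
qed

lemma jstr_of_Jcoset: "valid_jlab l \<Longrightarrow> jstr_of (Jcoset l) = jstring l"
  unfolding jstr_of_def using Jcoset_inj by (intro some_equality) blast+

subsection \<open>L cosets\<close>

definition lwords :: "nat list list" where
  "lwords = [[5,2,1,3,4,5,2,3,5], [3,5,2,1,3,4,5,2,3,5], [3,4,5,2,1,3,4,5,2,3,5], [], [3], [3,4,3]]"

definition lword :: "bool \<times> nat \<Rightarrow> nat list" where
  "lword \<sigma> = (case \<sigma> of (bar, k) \<Rightarrow> if bar then zword @ lwords ! (k - 1) else lwords ! (k - 1))"

definition llabs :: "(bool \<times> nat) list" where
  "llabs = [(bar, k). bar \<leftarrow> [False, True], k \<leftarrow> [1..<7]]"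

definition lbar :: "bool \<times> nat \<Rightarrow> bool \<times> nat" where
  "lbar \<sigma> = (\<not> fst \<sigma>, snd \<sigma>)"

lemma llabs_iff: "(bar, k) \<in> set llabs \<longleftrightarrow> 1 \<le> k \<and> k \<le> 6"
  by (cases bar) (auto simp: llabs_def)

lemma lbar_in_llabs: "\<sigma> \<in> set llabs \<Longrightarrow> lbar \<sigma> \<in> set llabs"
  by (cases \<sigma>) (simp add: lbar_def llabs_iff)

lemma lbar_lbar [simp]: "lbar (lbar \<sigma>) = \<sigma>"
  by (simp add: lbar_def)

lemma lword_in_H1: "\<sigma> \<in> set llabs \<Longrightarrow> word_mat (lword \<sigma>) \<in> H1"
proof -
  assume "\<sigma> \<in> set llabs"
  moreover obtain bar k where \<sigma>: "\<sigma> = (bar, k)" by (cases \<sigma>)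
  ultimately have "k - 1 < 6" by (auto simp: llabs_iff)
  have "list_all (\<lambda>w. set w \<subseteq> {0,1,2,3,4,5}) lwords \<and> length lwords = 6 \<and> set zword \<subseteq> {0,1,2,3,4,5}"
    by code_simp
  then have "set (lword \<sigma>) \<subseteq> {0,1,2,3,4,5}"
    using \<sigma> \<open>k - 1 < 6\<close> by (auto simp: lword_def list_all_length)
  then show ?thesis by (intro word_mat_in_H1) auto
qed

lemma Z1_mult_lword: "Z1 ** word_mat (lword \<sigma>) = word_mat (lword (lbar \<sigma>))"
proof (cases \<sigma>)
  case (Pair bar k)
  show ?thesis
  proof (cases bar)
    case True
    have "Z1 ** word_mat (lword \<sigma>) = (Z1 ** Z1) ** word_mat (lwords ! (k - 1))"
      by (simp add: Pair True lword_def word_mat_append Z1_eq_word matrix_mul_assoc)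
    then show ?thesis by (simp add: Pair True lword_def lbar_def Z1_involutive)
  next
    case False
    then show ?thesis by (simp add: Pair lword_def lbar_def word_mat_append Z1_eq_word)
  qed
qed

lemma lwords_rows: "map word_rows lwords = [
     [[1,0,0,0,0,0,0],[0,-1,-1,-1,0,1,1],[0,-1,-1,-1,1,0,1],[0,-1,-1,-1,1,1,0],[0,-2,-1,-1,1,1,1],[0,-1,-2,-1,1,1,1],[0,-1,-1,-2,1,1,1]],
     [[1,0,0,0,0,0,0],[0,-1,-1,-1,0,1,1],[0,-1,-1,-1,1,0,1],[0,-1,-1,-1,1,1,0],[0,-1,-2,-1,1,1,1],[0,-2,-1,-1,1,1,1],[0,-1,-1,-2,1,1,1]],
     [[1,0,0,0,0,0,0],[0,-1,-1,-1,0,1,1],[0,-1,-1,-1,1,0,1],[0,-1,-1,-1,1,1,0],[0,-1,-1,-2,1,1,1],[0,-2,-1,-1,1,1,1],[0,-1,-2,-1,1,1,1]],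
     [[1,0,0,0,0,0,0],[0,1,0,0,0,0,0],[0,0,1,0,0,0,0],[0,0,0,1,0,0,0],[0,0,0,0,1,0,0],[0,0,0,0,0,1,0],[0,0,0,0,0,0,1]],
     [[1,0,0,0,0,0,0],[0,1,0,0,0,0,0],[0,0,1,0,0,0,0],[0,0,0,1,0,0,0],[0,0,0,0,0,1,0],[0,0,0,0,1,0,0],[0,0,0,0,0,0,1]],
     [[1,0,0,0,0,0,0],[0,1,0,0,0,0,0],[0,0,1,0,0,0,0],[0,0,0,1,0,0,0],[0,0,0,0,0,0,1],[0,0,0,0,0,1,0],[0,0,0,0,1,0,0]]]"
  by code_simp

lemma ufun_eq_word_mat:
  assumes k: "k \<in> {1,2,3,4,5,6}" and x: "x \<in> Vset"
  shows "ufun k x = word_mat (lwords ! (k - 1)) *v x"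
proof -
  have x5: "x$5 = 1 + x$1 + x$2 + x$3 + x$4 - x$6 - x$7" using x by (simp add: Vset_def algebra_simps)
  have "length lwords = 6" by (simp add: lwords_def)
  then have "word_mat (lwords ! (k - 1)) = mat_of_rows (map word_rows lwords ! (k - 1))"
    using k by (auto simp: word_mat_eq_rows)
  moreover have "ufun k x = mat_of_rows (map word_rows lwords ! (k - 1)) *v x"
    using k by (elim insertE emptyE) (simp_all add: lwords_rows ufun_def mk7_def Let_def
        vec_eq_iff forall_7 matrix_vector_mult_def sum_UNIV_7 x5 algebra_simps)
  ultimately show ?thesis by simp
qed

lemma ulab_eq_word_mat:
  assumes \<sigma>: "\<sigma> \<in> set llabs" and x: "x \<in> Vset"
  shows "ulab \<sigma> x = word_mat (lword \<sigma>) *v x"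
proof -
  obtain bar k where \<sigma>': "\<sigma> = (bar, k)" by (cases \<sigma>)
  then have k: "k \<in> {1,2,3,4,5,6}" using \<sigma> by (auto simp: llabs_iff)
  show ?thesis
    using ufun_eq_word_mat[OF k x]
    by (cases bar) (simp_all add: \<sigma>' ulab_def lword_def word_mat_append Z1_eq_word matrix_vector_mul_assoc)
qed

lemma Lcoset_eq_rcos: "\<sigma> \<in> set llabs \<Longrightarrow> Lcoset \<sigma> = rcos GL (word_mat (lword \<sigma>))"
  unfolding Lcoset_def
  by (rule arg_cong[of _ _ "rcos GL"], rule the_equality)
    (auto simp: ulab_eq_word_mat lword_in_H1 intro: mat_eq_on_V)

lemma Lcoset_memE:
  assumes "\<sigma> \<in> set llabs" and "b \<in> Lcoset \<sigma>"
  obtains g where "g \<in> GL" and "b = g ** word_mat (lword \<sigma>)"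
  using assms by (auto simp: Lcoset_eq_rcos rcos_def)

lemma lword_in_Lcoset: "\<sigma> \<in> set llabs \<Longrightarrow> word_mat (lword \<sigma>) \<in> Lcoset \<sigma>"
  using gen_grp.one[of "{tmat 1 2, tmat 2 3, tmat 3 4, tmat 6 7, tmat 5 7 ** X1 ** tmat 5 7}"]
  by (force simp: Lcoset_eq_rcos rcos_def GL_def)

lemma Lcoset_subset_H1: "\<sigma> \<in> set llabs \<Longrightarrow> Lcoset \<sigma> \<subseteq> H1"
proof
  fix b assume \<sigma>: "\<sigma> \<in> set llabs" and "b \<in> Lcoset \<sigma>"
  then obtain g where "g \<in> GL" and "b = g ** word_mat (lword \<sigma>)" by (rule Lcoset_memE)
  then show "b \<in> H1"
    using GL_subset_H1 lword_in_H1[OF \<sigma>] unfolding H1_def by (blast intro: gen_grp.mult)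
qed

lemma Z1_mult_Lcoset: "\<sigma> \<in> set llabs \<Longrightarrow> b \<in> Lcoset \<sigma> \<Longrightarrow> Z1 ** b \<in> Lcoset (lbar \<sigma>)"
proof -
  assume \<sigma>: "\<sigma> \<in> set llabs" and "b \<in> Lcoset \<sigma>"
  then obtain g where g: "g \<in> GL" and b: "b = g ** word_mat (lword \<sigma>)" by (rule Lcoset_memE)
  have "Z1 ** b = g ** (Z1 ** word_mat (lword \<sigma>))"
    using Z1_central[of g] g GL_subset_H1 by (auto simp: b matrix_mul_assoc)
  then show ?thesis
    using g lbar_in_llabs[OF \<sigma>] by (auto simp: Z1_mult_lword Lcoset_eq_rcos rcos_def)
qed

text \<open>The row vector psi is fixed by GL, so it separates the cosets of GL.\<close>
definition psi :: "int list" where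
  "psi = [0,0,0,0,-1,1,1]"

definition lpsi :: "bool \<times> nat \<Rightarrow> int list" where
  "lpsi \<sigma> = word_row (lword \<sigma>) psi"

lemma GL_fixes_psi: "g \<in> GL \<Longrightarrow> vec_of_list psi v* g = vec_of_list psi"
proof -
  have "set w \<subseteq> {0,1,2,4,6} \<Longrightarrow> word_row w psi = psi" for w
    by (induction w) (auto simp: psi_def)
  then show "g \<in> GL \<Longrightarrow> ?thesis"
    unfolding GL_words by (auto simp: row_mult_word_mat psi_def)
qed

lemma Lcoset_psi:
  assumes "\<sigma> \<in> set llabs" and "b \<in> Lcoset \<sigma>"
  shows "vec_of_list psi v* b = vec_of_list (lpsi \<sigma>)"
proof -
  obtain g where g: "g \<in> GL" and b: "b = g ** word_mat (lword \<sigma>)"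
    using assms by (rule Lcoset_memE)
  have "vec_of_list psi v* b = (vec_of_list psi v* g) v* word_mat (lword \<sigma>)"
    by (simp add: b vector_matrix_mul_assoc)
  also have "\<dots> = vec_of_list (lpsi \<sigma>)"
    by (simp only: GL_fixes_psi[OF g]) (simp add: row_mult_word_mat lpsi_def psi_def)
  finally show ?thesis .
qed

lemma Lcoset_disjoint:
  assumes "\<sigma> \<in> set llabs" "\<tau> \<in> set llabs" "b \<in> Lcoset \<sigma>" "b \<in> Lcoset \<tau>"
  shows "\<sigma> = \<tau>"
proof -
  have "vec_of_list (lpsi \<sigma>) = vec_of_list (lpsi \<tau>)"
    using Lcoset_psi assms by metis
  then have "lpsi \<sigma> = lpsi \<tau>" by (simp add: vec_of_list_inject lpsi_def psi_def)
  moreover have "distinct (map lpsi llabs)" by code_simp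
  ultimately show ?thesis using assms(1,2) by (simp add: distinct_map inj_on_def)
qed

lemma Lcoset_inj: "\<sigma> \<in> set llabs \<Longrightarrow> \<tau> \<in> set llabs \<Longrightarrow> Lcoset \<sigma> = Lcoset \<tau> \<Longrightarrow> \<sigma> = \<tau>"
proof -
  assume \<sigma>: "\<sigma> \<in> set llabs" and \<tau>: "\<tau> \<in> set llabs" and eq: "Lcoset \<sigma> = Lcoset \<tau>"
  have "word_mat (lword \<sigma>) \<in> Lcoset \<tau>" using lword_in_Lcoset[OF \<sigma>] eq by simp
  then show "\<sigma> = \<tau>" by (rule Lcoset_disjoint[OF \<sigma> \<tau> lword_in_Lcoset[OF \<sigma>]])
qed

lemma Lcoset_notin_Jcosets:
  assumes \<sigma>: "\<sigma> \<in> set llabs"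
  shows "Lcoset \<sigma> \<notin> Jcosets"
proof
  assume "Lcoset \<sigma> \<in> Jcosets"
  then obtain \<alpha> where J: "Lcoset \<sigma> = rcos GJ \<alpha>" unfolding Jcosets_def by blast
  have "list_all (\<lambda>\<sigma>. \<exists>n \<in> {0,1,2,4,6}.
      word_row (n # lword \<sigma>) (unit_list 0) \<noteq> word_row (lword \<sigma>) (unit_list 0)) llabs"
    by code_simp
  then obtain n where n: "n \<in> {0,1,2,4,6}"
    and ne: "word_row (n # lword \<sigma>) (unit_list 0) \<noteq> word_row (lword \<sigma>) (unit_list 0)"
    using \<sigma> by (auto simp: list_all_iff)
  have "gen n \<in> GL" using n unfolding GL_words by (auto intro!: exI[of _ "[n]"])
  then have "word_mat (n # lword \<sigma>) \<in> Lcoset \<sigma>" by (simp add: Lcoset_eq_rcos[OF \<sigma>] rcos_def)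
  then have "word_mat (n # lword \<sigma>) $ 1 = word_mat (lword \<sigma>) $ 1"
    using lword_in_Lcoset[OF \<sigma>] by (simp add: J rcos_GJ_row1)
  then have "vec_of_list (word_row (n # lword \<sigma>) (unit_list 0))
      = vec_of_list (word_row (lword \<sigma>) (unit_list 0))"
    by (simp only: word_mat_row1)
  with ne show False by (simp add: vec_of_list_inject)
qed

lemma opposite_sym: "opposite X Y \<Longrightarrow> opposite Y X"
proof -
  assume "opposite X Y"
  then obtain a b where "a \<in> X" "b \<in> Y" "a = Z1 ** b" unfolding opposite_def by blast
  moreover have "b = Z1 ** (Z1 ** b)" by (simp add: matrix_mul_assoc Z1_involutive)
  ultimately show "opposite Y X" unfolding opposite_def by blast
qed

lemma opposite_Lcoset_iff:
  assumes "\<sigma> \<in> set llabs"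
  shows "opposite X (Lcoset \<sigma>) \<longleftrightarrow> X \<inter> Lcoset (lbar \<sigma>) \<noteq> {}"
proof
  assume "opposite X (Lcoset \<sigma>)"
  then show "X \<inter> Lcoset (lbar \<sigma>) \<noteq> {}"
    unfolding opposite_def using Z1_mult_Lcoset[OF assms] by blast
next
  assume "X \<inter> Lcoset (lbar \<sigma>) \<noteq> {}"
  then obtain a where a: "a \<in> X" "a \<in> Lcoset (lbar \<sigma>)" by blast
  then have "Z1 ** a \<in> Lcoset \<sigma>" using Z1_mult_Lcoset[of "lbar \<sigma>"] lbar_in_llabs[OF assms] by simp
  moreover have "a = Z1 ** (Z1 ** a)" by (simp add: matrix_mul_assoc Z1_involutive)
  ultimately show "opposite X (Lcoset \<sigma>)" unfolding opposite_def using a(1) by blast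
qed

definition jl_wit :: "((jlab \<times> bool \<times> nat) \<times> nat list) list" where
  "jl_wit = [
    (((True,0,0),(False,1)),[]), (((True,0,0),(False,2)),[]), (((True,0,0),(False,3)),[]),
    (((True,0,0),(False,4)),[]), (((True,0,0),(False,5)),[]), (((True,0,0),(False,6)),[]),
    (((True,0,1),(False,1)),[0]), (((True,0,1),(False,2)),[0]), (((True,0,1),(False,3)),[0]),
    (((True,0,1),(False,4)),[0,6,2,4,6]), (((True,0,1),(True,5)),[0,1,6,0,4]),
    (((True,0,1),(True,6)),[0,1,6,0]), (((True,0,2),(False,1)),[0,1]),
    (((True,0,2),(False,2)),[0,1]), (((True,0,2),(False,3)),[0,1]),
    (((True,0,2),(False,5)),[0,6,2,4,6]), (((True,0,2),(True,4)),[0,1,6,0,4]),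
    (((True,0,2),(True,6)),[0,1,6,0,4]), (((True,0,3),(False,1)),[0,1,2]),
    (((True,0,3),(False,2)),[0,1,2]), (((True,0,3),(False,3)),[0,1,2]),
    (((True,0,3),(False,6)),[0,6,2,4,6]), (((True,0,3),(True,4)),[0,1,6,0]),
    (((True,0,3),(True,5)),[0,1,6,0]), (((True,1,0),(False,1)),[0,6,2,4,6]),
    (((True,1,0),(False,4)),[0]), (((True,1,0),(False,5)),[0]), (((True,1,0),(False,6)),[0]),
    (((True,1,0),(True,2)),[0,1,6,0,4]), (((True,1,0),(True,3)),[0,1,6,0,4]),
    (((True,1,1),(False,1)),[0,6,2,4,6,0]), (((True,1,1),(False,4)),[0,6,2,4,6,0]),
    (((True,1,1),(True,2)),[0,1,6,4]), (((True,1,1),(True,3)),[0,1,6,4]),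
    (((True,1,1),(True,5)),[0,1,6,4]), (((True,1,1),(True,6)),[0,1,6]),
    (((True,1,2),(False,1)),[0,1,6,0,4,6,2]), (((True,1,2),(False,5)),[0,6,2,4,6,0]),
    (((True,1,2),(True,2)),[0,6,4]), (((True,1,2),(True,3)),[0,6,4]),
    (((True,1,2),(True,4)),[0,1,6,4]), (((True,1,2),(True,6)),[0,1,6,4]),
    (((True,1,3),(False,1)),[0,1,6,0,4,6]), (((True,1,3),(False,6)),[0,6,2,4,6,0]),
    (((True,1,3),(True,2)),[0,6,2,4]), (((True,1,3),(True,3)),[0,6,2,4]),
    (((True,1,3),(True,4)),[0,1,6]), (((True,1,3),(True,5)),[0,1,6]),
    (((True,2,0),(False,2)),[0,6,2,4,6]), (((True,2,0),(False,4)),[0,1]),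
    (((True,2,0),(False,5)),[0,1]), (((True,2,0),(False,6)),[0,1]),
    (((True,2,0),(True,1)),[0,1,6,0,4]), (((True,2,0),(True,3)),[0,1,6,0]),
    (((True,2,1),(False,2)),[0,6,2,4,6,0]), (((True,2,1),(False,4)),[0,1,6,0,4,6,2]),
    (((True,2,1),(True,1)),[0,1,6,4]), (((True,2,1),(True,3)),[0,1,6]),
    (((True,2,1),(True,5)),[0,6,4]), (((True,2,1),(True,6)),[0,6]),
    (((True,2,2),(False,2)),[0,1,6,0,4,6,2]), (((True,2,2),(False,5)),[0,1,6,0,4,6,2]),
    (((True,2,2),(True,1)),[0,6,4]), (((True,2,2),(True,3)),[0,6]),
    (((True,2,2),(True,4)),[0,6,4]), (((True,2,2),(True,6)),[0,6,4]),
    (((True,2,3),(False,2)),[0,1,6,0,4,6]), (((True,2,3),(False,6)),[0,1,6,0,4,6,2]),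
    (((True,2,3),(True,1)),[0,6,2,4]), (((True,2,3),(True,3)),[0,6,2]),
    (((True,2,3),(True,4)),[0,6]), (((True,2,3),(True,5)),[0,6]),
    (((True,3,0),(False,3)),[0,6,2,4,6]), (((True,3,0),(False,4)),[0,1,2]),
    (((True,3,0),(False,5)),[0,1,2]), (((True,3,0),(False,6)),[0,1,2]),
    (((True,3,0),(True,1)),[0,1,6,0]), (((True,3,0),(True,2)),[0,1,6,0]),
    (((True,3,1),(False,3)),[0,6,2,4,6,0]), (((True,3,1),(False,4)),[0,1,6,0,4,6]),
    (((True,3,1),(True,1)),[0,1,6]), (((True,3,1),(True,2)),[0,1,6]),
    (((True,3,1),(True,5)),[0,6,2,4]), (((True,3,1),(True,6)),[0,6,2]),
    (((True,3,2),(False,3)),[0,1,6,0,4,6,2]), (((True,3,2),(False,5)),[0,1,6,0,4,6]),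
    (((True,3,2),(True,1)),[0,6]), (((True,3,2),(True,2)),[0,6]),
    (((True,3,2),(True,4)),[0,6,2,4]), (((True,3,2),(True,6)),[0,6,2,4]),
    (((True,3,3),(False,3)),[0,1,6,0,4,6]), (((True,3,3),(False,6)),[0,1,6,0,4,6]),
    (((True,3,3),(True,1)),[0,6,2]), (((True,3,3),(True,2)),[0,6,2]),
    (((True,3,3),(True,4)),[0,6,2]), (((True,3,3),(True,5)),[0,6,2]),
    (((False,0,0),(True,1)),[]), (((False,0,0),(True,2)),[]), (((False,0,0),(True,3)),[]),
    (((False,0,0),(True,4)),[]), (((False,0,0),(True,5)),[]), (((False,0,0),(True,6)),[]),
    (((False,0,1),(False,5)),[0,1,6,0,4]), (((False,0,1),(False,6)),[0,1,6,0]),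
    (((False,0,1),(True,1)),[0]), (((False,0,1),(True,2)),[0]), (((False,0,1),(True,3)),[0]),
    (((False,0,1),(True,4)),[0,6,2,4,6]), (((False,0,2),(False,4)),[0,1,6,0,4]),
    (((False,0,2),(False,6)),[0,1,6,0,4]), (((False,0,2),(True,1)),[0,1]),
    (((False,0,2),(True,2)),[0,1]), (((False,0,2),(True,3)),[0,1]),
    (((False,0,2),(True,5)),[0,6,2,4,6]), (((False,0,3),(False,4)),[0,1,6,0]),
    (((False,0,3),(False,5)),[0,1,6,0]), (((False,0,3),(True,1)),[0,1,2]),
    (((False,0,3),(True,2)),[0,1,2]), (((False,0,3),(True,3)),[0,1,2]),
    (((False,0,3),(True,6)),[0,6,2,4,6]), (((False,1,0),(False,2)),[0,1,6,0,4]),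
    (((False,1,0),(False,3)),[0,1,6,0,4]), (((False,1,0),(True,1)),[0,6,2,4,6]),
    (((False,1,0),(True,4)),[0]), (((False,1,0),(True,5)),[0]), (((False,1,0),(True,6)),[0]),
    (((False,1,1),(False,2)),[0,1,6,4]), (((False,1,1),(False,3)),[0,1,6,4]),
    (((False,1,1),(False,5)),[0,1,6,4]), (((False,1,1),(False,6)),[0,1,6]),
    (((False,1,1),(True,1)),[0,6,2,4,6,0]), (((False,1,1),(True,4)),[0,6,2,4,6,0]),
    (((False,1,2),(False,2)),[0,6,4]), (((False,1,2),(False,3)),[0,6,4]),
    (((False,1,2),(False,4)),[0,1,6,4]), (((False,1,2),(False,6)),[0,1,6,4]),
    (((False,1,2),(True,1)),[0,1,6,0,4,6,2]), (((False,1,2),(True,5)),[0,6,2,4,6,0]),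
    (((False,1,3),(False,2)),[0,6,2,4]), (((False,1,3),(False,3)),[0,6,2,4]),
    (((False,1,3),(False,4)),[0,1,6]), (((False,1,3),(False,5)),[0,1,6]),
    (((False,1,3),(True,1)),[0,1,6,0,4,6]), (((False,1,3),(True,6)),[0,6,2,4,6,0]),
    (((False,2,0),(False,1)),[0,1,6,0,4]), (((False,2,0),(False,3)),[0,1,6,0]),
    (((False,2,0),(True,2)),[0,6,2,4,6]), (((False,2,0),(True,4)),[0,1]),
    (((False,2,0),(True,5)),[0,1]), (((False,2,0),(True,6)),[0,1]),
    (((False,2,1),(False,1)),[0,1,6,4]), (((False,2,1),(False,3)),[0,1,6]),
    (((False,2,1),(False,5)),[0,6,4]), (((False,2,1),(False,6)),[0,6]),
    (((False,2,1),(True,2)),[0,6,2,4,6,0]), (((False,2,1),(True,4)),[0,1,6,0,4,6,2]),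
    (((False,2,2),(False,1)),[0,6,4]), (((False,2,2),(False,3)),[0,6]),
    (((False,2,2),(False,4)),[0,6,4]), (((False,2,2),(False,6)),[0,6,4]),
    (((False,2,2),(True,2)),[0,1,6,0,4,6,2]), (((False,2,2),(True,5)),[0,1,6,0,4,6,2]),
    (((False,2,3),(False,1)),[0,6,2,4]), (((False,2,3),(False,3)),[0,6,2]),
    (((False,2,3),(False,4)),[0,6]), (((False,2,3),(False,5)),[0,6]),
    (((False,2,3),(True,2)),[0,1,6,0,4,6]), (((False,2,3),(True,6)),[0,1,6,0,4,6,2]),
    (((False,3,0),(False,1)),[0,1,6,0]), (((False,3,0),(False,2)),[0,1,6,0]),
    (((False,3,0),(True,3)),[0,6,2,4,6]), (((False,3,0),(True,4)),[0,1,2]),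
    (((False,3,0),(True,5)),[0,1,2]), (((False,3,0),(True,6)),[0,1,2]),
    (((False,3,1),(False,1)),[0,1,6]), (((False,3,1),(False,2)),[0,1,6]),
    (((False,3,1),(False,5)),[0,6,2,4]), (((False,3,1),(False,6)),[0,6,2]),
    (((False,3,1),(True,3)),[0,6,2,4,6,0]), (((False,3,1),(True,4)),[0,1,6,0,4,6]),
    (((False,3,2),(False,1)),[0,6]), (((False,3,2),(False,2)),[0,6]),
    (((False,3,2),(False,4)),[0,6,2,4]), (((False,3,2),(False,6)),[0,6,2,4]),
    (((False,3,2),(True,3)),[0,1,6,0,4,6,2]), (((False,3,2),(True,5)),[0,1,6,0,4,6]),
    (((False,3,3),(False,1)),[0,6,2]), (((False,3,3),(False,2)),[0,6,2]),
    (((False,3,3),(False,4)),[0,6,2]), (((False,3,3),(False,5)),[0,6,2]),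
    (((False,3,3),(True,3)),[0,1,6,0,4,6]), (((False,3,3),(True,6)),[0,1,6,0,4,6])]"

lemma jl_wit_ok:
  "map fst jl_wit = [(l, \<sigma>). l \<leftarrow> jlabs, \<sigma> \<leftarrow> llabs, lform (jrow l) (lpsi \<sigma>) = 0]
   \<and> list_all (\<lambda>((l, \<sigma>), u). set u \<subseteq> {0,1,2,4,6} \<and> word_row (u @ lword \<sigma>) (unit_list 0) = jrow l) jl_wit"
  by code_simp

text \<open>Necessity: H1 preserves lform, and lform (unit_list 0) psi = 0. Sufficiency: the witnesses
  jl_wit.\<close>
lemma Jcoset_meets_Lcoset_iff:
  assumes l: "valid_jlab l" and \<sigma>: "\<sigma> \<in> set llabs"
  shows "Jcoset l \<inter> Lcoset \<sigma> \<noteq> {} \<longleftrightarrow> lform (jrow l) (lpsi \<sigma>) = 0"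
proof
  assume "Jcoset l \<inter> Lcoset \<sigma> \<noteq> {}"
  then obtain a where aJ: "a \<in> Jcoset l" and aL: "a \<in> Lcoset \<sigma>" by blast
  then have "a \<in> H1" using Jcoset_eq_row1[OF l] by blast
  then obtain w where a: "a = word_mat w" unfolding H1_words by blast
  have "word_row w (unit_list 0) = jrow l"
    using aJ Jcoset_eq_row1[OF l] by (simp add: a word_mat_row1 vec_of_list_inject)
  moreover have "word_row w psi = lpsi \<sigma>"
    using Lcoset_psi[OF \<sigma> aL] by (simp add: a row_mult_word_mat psi_def lpsi_def vec_of_list_inject)
  ultimately show "lform (jrow l) (lpsi \<sigma>) = 0"
    using lform_word_row[of "unit_list 0" psi w] by (simp add: psi_def unit_list_0)
next
  assume "lform (jrow l) (lpsi \<sigma>) = 0"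
  then have "(l, \<sigma>) \<in> set [(l, \<sigma>). l \<leftarrow> jlabs, \<sigma> \<leftarrow> llabs, lform (jrow l) (lpsi \<sigma>) = 0]"
    using l \<sigma> by (auto simp: valid_jlab_iff)
  then have "(l, \<sigma>) \<in> set (map fst jl_wit)"
    using jl_wit_ok by (simp only:)
  then obtain u where "((l, \<sigma>), u) \<in> set jl_wit" by auto
  moreover have "\<forall>((l, \<sigma>), u) \<in> set jl_wit. set u \<subseteq> {0,1,2,4,6}
      \<and> word_row (u @ lword \<sigma>) (unit_list 0) = jrow l"
    using jl_wit_ok unfolding list_all_iff by (rule conjunct2)
  ultimately have u: "set u \<subseteq> {0,1,2,4,6}" "word_row (u @ lword \<sigma>) (unit_list 0) = jrow l"
    by auto
  have "word_mat u \<in> GL" using u(1) unfolding GL_words by blast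
  then have "word_mat (u @ lword \<sigma>) \<in> Lcoset \<sigma>"
    by (simp add: Lcoset_eq_rcos[OF \<sigma>] rcos_def word_mat_append)
  moreover have "word_mat (u @ lword \<sigma>) \<in> Jcoset l"
    using u Lcoset_subset_H1[OF \<sigma>] calculation
    by (auto simp: Jcoset_eq_row1[OF l] word_mat_row1)
  ultimately show "Jcoset l \<inter> Lcoset \<sigma> \<noteq> {}" by blast
qed

lemma hamming_self: "hamming s s = 0"
  by (induction s) (simp_all add: hamming_def)

lemma dT_Jcoset_Jcoset:
  assumes "valid_jlab l" and "valid_jlab l'"
  shows "dT (Jcoset l) (Jcoset l') = hamming (jstring l) (jstring l')"
proof (cases "Jcoset l = Jcoset l'")
  case True
  then have "l = l'" using Jcoset_inj assms by blast
  then show ?thesis by (simp add: dT_def hamming_self)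
next
  case False
  then show ?thesis using assms by (simp add: dT_def Jcoset_in_Jcosets jstr_of_Jcoset)
qed

lemma dT_Lcoset_Lcoset:
  assumes \<sigma>: "\<sigma> \<in> set llabs" and \<tau>: "\<tau> \<in> set llabs"
  shows "dT (Lcoset \<sigma>) (Lcoset \<tau>) = (if \<sigma> = \<tau> then 0 else if \<tau> = lbar \<sigma> then 4 else 2)"
proof -
  have "opposite (Lcoset \<sigma>) (Lcoset \<tau>) \<longleftrightarrow> \<sigma> = lbar \<tau>"
    using Lcoset_disjoint[OF \<sigma> lbar_in_llabs[OF \<tau>]] lword_in_Lcoset[OF \<sigma>]
    by (auto simp: opposite_Lcoset_iff[OF \<tau>])
  then show ?thesis
    using Lcoset_inj[OF \<sigma> \<tau>] Lcoset_notin_Jcosets[OF \<sigma>] by (auto simp: dT_def)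
qed

lemma opposite_Jcoset_Lcoset_iff:
  assumes "valid_jlab l" and "\<sigma> \<in> set llabs"
  shows "opposite (Jcoset l) (Lcoset \<sigma>) \<longleftrightarrow> lform (jrow l) (lpsi (lbar \<sigma>)) = 0"
  using assms by (simp add: opposite_Lcoset_iff Jcoset_meets_Lcoset_iff lbar_in_llabs)

lemma dT_Jcoset_Lcoset:
  assumes l: "valid_jlab l" and \<sigma>: "\<sigma> \<in> set llabs"
  shows "dT (Jcoset l) (Lcoset \<sigma>) = (if lform (jrow l) (lpsi (lbar \<sigma>)) = 0 then 4 else 2)"
    and "dT (Lcoset \<sigma>) (Jcoset l) = (if lform (jrow l) (lpsi (lbar \<sigma>)) = 0 then 4 else 2)"
proof -
  have "Jcoset l \<noteq> Lcoset \<sigma>" using Jcoset_in_Jcosets[OF l] Lcoset_notin_Jcosets[OF \<sigma>] by auto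
  then show "dT (Jcoset l) (Lcoset \<sigma>) = (if lform (jrow l) (lpsi (lbar \<sigma>)) = 0 then 4 else 2)"
    and "dT (Lcoset \<sigma>) (Jcoset l) = (if lform (jrow l) (lpsi (lbar \<sigma>)) = 0 then 4 else 2)"
    using Lcoset_notin_Jcosets[OF \<sigma>] opposite_Jcoset_Lcoset_iff[OF l \<sigma>] opposite_sym
    by (auto simp: dT_def)
qed

type_synonym tlab = "jlab + bool \<times> nat"

definition coset_of :: "tlab \<Rightarrow> mat7 set" where
  "coset_of x = (case x of Inl l \<Rightarrow> Jcoset l | Inr \<sigma> \<Rightarrow> Lcoset \<sigma>)"

definition tlab_ok :: "tlab \<Rightarrow> bool" where
  "tlab_ok x = (case x of Inl l \<Rightarrow> l \<in> set jlabs | Inr \<sigma> \<Rightarrow> \<sigma> \<in> set llabs)"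

text \<open>A label together with the row vector deciding oppositeness between J and L cosets,
  so that the vector is computed once per label in the final table.\<close>
definition lab_data :: "tlab \<Rightarrow> tlab \<times> int list" where
  "lab_data x = (x, case x of Inl l \<Rightarrow> jrow l | Inr \<sigma> \<Rightarrow> lpsi (lbar \<sigma>))"

fun data_dist :: "tlab \<times> int list \<Rightarrow> tlab \<times> int list \<Rightarrow> nat" where
  "data_dist (Inl l, _) (Inl l', _) = hamming (jstring l) (jstring l')"
| "data_dist (Inl l, p) (Inr \<sigma>, q) = (if lform p q = 0 then 4 else 2)"
| "data_dist (Inr \<sigma>, p) (Inl l, q) = (if lform q p = 0 then 4 else 2)"
| "data_dist (Inr \<sigma>, _) (Inr \<tau>, _) = (if \<sigma> = \<tau> then 0 else if \<tau> = lbar \<sigma> then 4 else 2)"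

lemma dT_coset_of:
  assumes "tlab_ok x" and "tlab_ok y"
  shows "dT (coset_of x) (coset_of y) = data_dist (lab_data x) (lab_data y)"
  using assms
  by (cases x; cases y)
    (simp_all add: tlab_ok_def coset_of_def lab_data_def valid_jlab_iff[symmetric]
      dT_Jcoset_Jcoset dT_Jcoset_Lcoset dT_Lcoset_Lcoset)

definition jlab_of_string :: "bool list \<Rightarrow> jlab" where
  "jlab_of_string s = the (find (\<lambda>l. jstring l = s) jlabs)"

definition gamma1_string :: "cidx \<Rightarrow> bool list" where
  "gamma1_string v = (case v of (s, i, j) \<Rightarrow> if i = 0 \<and> j = 1 then replicate 6 s
      else map (\<lambda>p. if p = i - 1 \<or> p = j - 1 then s else \<not> s) [1..<7])"

definition gamma1_lab :: "cidx \<Rightarrow> tlab" where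
  "gamma1_lab v = (case v of (s, i, j) \<Rightarrow>
     if \<not> (i = 0 \<and> j = 1) \<and> i \<le> 1 then Inr (\<not> s, j - 1) else Inl (jlab_of_string (gamma1_string v)))"

definition list56 :: "cidx list" where
  "list56 = [(s, i, j). s \<leftarrow> [True, False], j \<leftarrow> [0..<8], i \<leftarrow> [0..<j]]"

lemma set_list56: "set list56 = cosets56"
proof -
  have "(s, i, j) \<in> set list56 \<longleftrightarrow> (s, i, j) \<in> cosets56" for s i j
    by (cases s) (force simp: list56_def cosets56_def image_iff)+
  then show ?thesis by auto
qed

lemma gamma1_lab_ok:
  "list_all (\<lambda>v. case gamma1_lab v of
      Inl l \<Rightarrow> l \<in> set jlabs \<and> jstring l = gamma1_string v | Inr \<sigma> \<Rightarrow> \<sigma> \<in> set llabs) list56"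
  by code_simp

lemma Jcoset_of_string_eq:
  assumes "l \<in> set jlabs"
  shows "Jcoset_of_string (jstring l) = Jcoset l"
proof -
  have "distinct (map jstring jlabs)" by code_simp
  then have "(THE l'. valid_jlab l' \<and> jstring l' = jstring l) = l"
    using assms by (intro the_equality) (auto simp: valid_jlab_iff distinct_map inj_on_def)
  then show ?thesis by (simp add: Jcoset_of_string_def)
qed

lemma gamma1_eq_coset_of:
  assumes "v \<in> cosets56"
  shows "tlab_ok (gamma1_lab v) \<and> gamma1 v = coset_of (gamma1_lab v)"
proof -
  obtain s i j where v: "v = (s, i, j)" by (cases v)
  have chk: "case gamma1_lab v of
      Inl l \<Rightarrow> l \<in> set jlabs \<and> jstring l = gamma1_string v | Inr \<sigma> \<Rightarrow> \<sigma> \<in> set llabs"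
    using gamma1_lab_ok assms unfolding list_all_iff set_list56 by blast
  then have ok: "tlab_ok (gamma1_lab v)" by (cases "gamma1_lab v") (simp_all add: tlab_ok_def)
  show ?thesis
  proof (cases "\<not> (i = 0 \<and> j = 1) \<and> i \<le> 1")
    case True
    then show ?thesis using ok by (cases s) (auto simp: v gamma1_def gamma1_lab_def coset_of_def)
  next
    case False
    define l where "l = jlab_of_string (gamma1_string v)"
    have lab: "gamma1_lab v = Inl l" using False by (simp add: v gamma1_lab_def l_def)
    then have "l \<in> set jlabs" and "jstring l = gamma1_string v" using chk by simp_all
    then have "Jcoset_of_string (gamma1_string v) = Jcoset l" using Jcoset_of_string_eq by metis
    moreover have "gamma1 v = Jcoset_of_string (gamma1_string v)"
      using False unfolding v gamma1_def gamma1_string_def by auto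
    ultimately show ?thesis using ok by (simp add: lab coset_of_def)
  qed
qed

definition sqdist :: "int list \<Rightarrow> int list \<Rightarrow> int" where
  "sqdist a b = sum_list (map (\<lambda>(x, y). (x - y)^2) (zip a b))"

definition in_O1 :: "cidx \<Rightarrow> bool" where
  "in_O1 v = (case v of (s, i, j) \<Rightarrow> (s \<and> i = 0 \<or> \<not> s \<and> i = 1) \<and> 2 \<le> j \<and> j \<le> 7)"

definition in_O2 :: "cidx \<Rightarrow> bool" where
  "in_O2 v = (case v of (s, i, j) \<Rightarrow> (s \<and> i = 1 \<or> \<not> s \<and> i = 0) \<and> 2 \<le> j \<and> j \<le> 7)"

lemma O1_iff: "v \<in> O1 \<longleftrightarrow> in_O1 v"
  by (cases v) (auto simp: O1_def in_O1_def)

lemma O2_iff: "v \<in> O2 \<longleftrightarrow> in_O2 v"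
  by (cases v) (auto simp: O2_def in_O2_def)

definition gamma1_table :: "((tlab \<times> int list) \<times> int list \<times> bool \<times> bool) list" where
  "gamma1_table = map (\<lambda>v. (lab_data (gamma1_lab v), map (cvec v) [0..<8], in_O1 v, in_O2 v)) list56"

lemma gamma1_table_ok:
  "list_all (\<lambda>(p, c, a1, a2). list_all (\<lambda>(q, d, b1, b2).
      16 * int (data_dist p q) = sqdist c d - (if a1 \<and> b2 \<or> a2 \<and> b1 then 32 else 0))
    gamma1_table) gamma1_table"
  by code_simp

lemma sqdist_map: "sqdist (map f xs) (map g xs) = (\<Sum>k\<leftarrow>xs. (f k - g k)^2)"
  by (induction xs) (simp_all add: sqdist_def)

lemma dd_eq_sqdist: "dd v w = real_of_int (sqdist (map (cvec v) [0..<8]) (map (cvec w) [0..<8])) / 16"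
proof -
  have "sqdist (map (cvec v) [0..<8]) (map (cvec w) [0..<8]) = (\<Sum>k<8. (cvec v k - cvec w k)^2)"
    unfolding sqdist_map
    by (simp only: sum_set_upt_conv_sum_list_nat[symmetric] set_upt atLeast0LessThan)
  then show ?thesis by (simp add: dd_def)
qed

lemma dT_gamma1:
  assumes v: "v \<in> cosets56" and w: "w \<in> cosets56"
  shows "16 * int (dT (gamma1 v) (gamma1 w))
    = sqdist (map (cvec v) [0..<8]) (map (cvec w) [0..<8])
      - (if in_O1 v \<and> in_O2 w \<or> in_O2 v \<and> in_O1 w then 32 else 0)"
proof -
  have row: "(lab_data (gamma1_lab u), map (cvec u) [0..<8], in_O1 u, in_O2 u) \<in> set gamma1_table"
    if "u \<in> cosets56" for u
    unfolding gamma1_table_def set_map set_list56 using that by (rule imageI)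
  have "\<forall>(p, c, a1, a2) \<in> set gamma1_table. \<forall>(q, d, b1, b2) \<in> set gamma1_table.
      16 * int (data_dist p q) = sqdist c d - (if a1 \<and> b2 \<or> a2 \<and> b1 then 32 else 0)"
    using gamma1_table_ok by (simp only: list_all_iff)
  from bspec[OF this row[OF v]] have "\<forall>(q, d, b1, b2) \<in> set gamma1_table.
      16 * int (data_dist (lab_data (gamma1_lab v)) q) = sqdist (map (cvec v) [0..<8]) d
        - (if in_O1 v \<and> b2 \<or> in_O2 v \<and> b1 then 32 else 0)"
    unfolding prod.case .
  from bspec[OF this row[OF w]] have "16 * int (data_dist (lab_data (gamma1_lab v)) (lab_data (gamma1_lab w)))
    = sqdist (map (cvec v) [0..<8]) (map (cvec w) [0..<8])
      - (if in_O1 v \<and> in_O2 w \<or> in_O2 v \<and> in_O1 w then 32 else 0)"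
    unfolding prod.case .
  moreover have "dT (gamma1 v) (gamma1 w) = data_dist (lab_data (gamma1_lab v)) (lab_data (gamma1_lab w))"
    using gamma1_eq_coset_of[OF v] gamma1_eq_coset_of[OF w] by (simp add: dT_coset_of)
  ultimately show ?thesis by simp
qed

theorem proposition6p5:
  assumes "v \<in> cosets56" and "w \<in> cosets56"
  shows "real (dT (gamma1 v) (gamma1 w)) =
           (if (v \<in> O1 \<and> w \<in> O2) \<or> (v \<in> O2 \<and> w \<in> O1) then dd v w - 2 else dd v w)"
proof -
  have "16 * real (dT (gamma1 v) (gamma1 w))
      = real_of_int (sqdist (map (cvec v) [0..<8]) (map (cvec w) [0..<8]))
        - (if in_O1 v \<and> in_O2 w \<or> in_O2 v \<and> in_O1 w then 32 else 0)"
    using arg_cong[OF dT_gamma1[OF assms], of real_of_int] by simp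
  then show ?thesis by (auto simp: dd_eq_sqdist O1_iff O2_iff)
qed

end
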